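(* Let $(p_n)$ be an arbitrary sequence of positive integers with $p_n\to+\infty$. Let $\mathbf{U}_{ni}$, $i=1,\ldots,n$, $n=1,2,\ldots$, be a triangular array such that, for each $n$, the random $p_n$-vectors $\mathbf{U}_{n1},\ldots,\mathbf{U}_{nn}$ are i.i.d. uniformly distributed on the unit sphere $\mathcal{S}^{p_n-1}=\{\mathbf{x}\in\mathbb{R}^{p_n}:\|\mathbf{x}\|=1\}$. Let $R_n=\frac{p_n}{n}\sum_{i,j=1}^n \mathbf{U}_{ni}'\mathbf{U}_{nj}$. Then $$R_n^{\rm St}=\frac{R_n-p_n}{\sqrt{2p_n}}=\frac{\sqrt{2p_n}}{n}\sum_{1\le i<j\le n}\mathbf{U}_{ni}'\mathbf{U}_{nj}$$ converges in distribution to the standard normal distribution as $n\to\infty$.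
   Context: No restriction is placed on how $p_n$ grows relative to $n$, other than $p_n\to\infty$. *)

theory Defs
  imports "HOL-Probability.Probability"
begin

text \<open>Euclidean space R^p modelled as functions nat => real (coordinates 0..p-1),
  with the product Borel structure / product Lebesgue measure.\<close>

definition euclid_space :: "nat \<Rightarrow> (nat \<Rightarrow> real) measure" where
  "euclid_space p = PiM {..<p} (\<lambda>_. borel)"

definition lebesgue_p :: "nat \<Rightarrow> (nat \<Rightarrow> real) measure" where
  "lebesgue_p p = PiM {..<p} (\<lambda>_. lborel)"

definition inner_p :: "nat \<Rightarrow> (nat \<Rightarrow> real) \<Rightarrow> (nat \<Rightarrow> real) \<Rightarrow> real" where
  "inner_p p x y = (\<Sum>k<p. x k * y k)"

definition norm_p :: "nat \<Rightarrow> (nat \<Rightarrow> real) \<Rightarrow> real" where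
  "norm_p p x = sqrt (inner_p p x x)"

definition unit_ball_p :: "nat \<Rightarrow> (nat \<Rightarrow> real) set" where
  "unit_ball_p p = {x \<in> space (lebesgue_p p). norm_p p x \<le> 1}"

definition sphere_proj :: "nat \<Rightarrow> (nat \<Rightarrow> real) \<Rightarrow> (nat \<Rightarrow> real)" where
  "sphere_proj p x = (\<lambda>i. if i < p then x i / norm_p p x else undefined)"

text \<open>Uniform distribution (normalised surface measure) on the unit sphere S^{p-1}:
  the cone measure, i.e. sigma(A) = lambda({t x : x in A, 0 < t <= 1}) / lambda(unit ball),
  realised as the push-forward of the uniform distribution on the unit ball under x |-> x/|x|.\<close>

definition unif_sphere :: "nat \<Rightarrow> (nat \<Rightarrow> real) measure" where
  "unif_sphere p = distr (uniform_measure (lebesgue_p p) (unit_ball_p p)) (euclid_space p) (sphere_proj p)"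

end

theory Submission
  imports Defs
begin

text \<open>Write \<open>S\<^sub>k = U\<^sub>1 + \<dots> + U\<^sub>k\<close>. Since \<open>\<bar>U\<^sub>i\<bar> = 1\<close>, the statistic equals
  \<open>(\<surd>(2p)/n) \<Sum>\<^sub>i \<langle>S\<^sub>i\<^sub>-\<^sub>1, U\<^sub>i\<rangle>\<close>, the terminal value of a martingale whose \<open>i\<close>-th increment has
  conditional variance \<open>2\<bar>S\<^sub>i\<^sub>-\<^sub>1\<bar>\<^sup>2/n\<^sup>2\<close>. Invariance of the uniform distribution under plane
  rotations and reflections reduces the law of \<open>\<langle>s, U\<rangle>\<close> to that of \<open>\<bar>s\<bar> U\<^sub>0\<close>, whose moments
  are \<open>0, \<bar>s\<bar>\<^sup>2/p, 0, 3\<bar>s\<bar>\<^sup>4/(p(p+2))\<close>. Hence \<open>E\<bar>S\<^sub>k\<bar>\<^sup>2 = k\<close>, and the accumulated conditional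
  variance \<open>V\<close> has mean \<open>1 - 1/n\<close> and mean square deviation from 1 at most \<open>1/n\<^sup>2 + 2/p\<close>.

  The martingale central limit theorem is then proved with characteristic functions. For the
  martingale \<open>M\<^sub>j\<close> stopped before \<open>V\<^sub>j\<close> exceeds 2, the process \<open>exp (i t M\<^sub>j + t\<^sup>2 V\<^sub>j / 2)\<close> is
  bounded, and by a third order Taylor expansion its conditional increments are
  \<open>O(t\<^sup>4 \<bar>S\<^sub>j\<^sub>-\<^sub>1\<bar>\<^sup>4 / n\<^sup>4)\<close>; summing, its expectation is \<open>1 + O(1/n)\<close>. Replacing \<open>V\<^sub>n\<close> by 1 and
  undoing the stopping costs \<open>O(E\<bar>V\<^sub>n - 1\<bar>)\<close>, so the characteristic function of the statistic
  converges to \<open>exp (- t\<^sup>2 / 2)\<close> as \<open>n, p \<rightarrow> \<infinity>\<close>, and Levy's continuity theorem concludes.\<close>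

lemma sets_lebesgue_p: "sets (lebesgue_p p) = sets (euclid_space p)"
  unfolding lebesgue_p_def euclid_space_def by (intro sets_PiM_cong) auto

lemma measurable_coordinate_euclid_space [measurable]:
  "k < p \<Longrightarrow> (\<lambda>x. x k) \<in> borel_measurable (euclid_space p)"
  unfolding euclid_space_def by (rule measurable_component_singleton) auto

lemma measurable_coordinate_lebesgue_p [measurable]:
  "k < p \<Longrightarrow> (\<lambda>x. x k) \<in> borel_measurable (lebesgue_p p)"
  using measurable_coordinate_euclid_space[of k p]
  by (simp add: measurable_cong_sets[OF sets_lebesgue_p refl])

lemma measurable_inner_p [measurable]: "inner_p p s \<in> borel_measurable (euclid_space p)"
  unfolding inner_p_def by measurable

lemma measurable_inner_p_self [measurable]: "(\<lambda>x. inner_p p x x) \<in> borel_measurable (euclid_space p)"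
  unfolding inner_p_def by measurable

lemma measurable_norm_p [measurable]: "norm_p p \<in> borel_measurable (lebesgue_p p)"
  unfolding norm_p_def inner_p_def by measurable

lemma measurable_sphere_proj [measurable]: "sphere_proj p \<in> measurable (lebesgue_p p) (euclid_space p)"
proof -
  have "sphere_proj p = (\<lambda>x. \<lambda>i\<in>{..<p}. x i / norm_p p x)"
    by (auto simp: sphere_proj_def fun_eq_iff)
  then show ?thesis unfolding euclid_space_def by (simp only:) (intro measurable_restrict, measurable)
qed

lemma inner_p_add_left: "inner_p p (\<lambda>i. x i + y i) z = inner_p p x z + inner_p p y z"
  unfolding inner_p_def by (simp add: distrib_right sum.distrib)

lemma inner_p_self_add:
  "inner_p p (\<lambda>i. x i + y i) (\<lambda>i. x i + y i) = inner_p p x x + 2 * inner_p p x y + inner_p p y y"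
  unfolding inner_p_def by (simp add: algebra_simps sum.distrib sum_distrib_left)

lemma inner_p_self_nonneg: "0 \<le> inner_p p x x"
  unfolding inner_p_def by (intro sum_nonneg) simp

lemma norm_p_nonneg: "0 \<le> norm_p p x"
  using inner_p_self_nonneg[of p x] by (simp add: norm_p_def)

lemma norm_p_power2: "(norm_p p x)^2 = inner_p p x x"
  unfolding norm_p_def using inner_p_self_nonneg[of p x] by simp

lemma coordinate_sq_le_inner_p: "k < p \<Longrightarrow> (x k)^2 \<le> inner_p p x x"
  unfolding inner_p_def power2_eq_square by (rule member_le_sum) auto

lemma sum_lessThan_remove2:
  fixes f :: "nat \<Rightarrow> 'b::comm_monoid_add"
  assumes "a \<noteq> b" "a < p" "b < p"
  shows "(\<Sum>k<p. f k) = f a + f b + (\<Sum>k\<in>{..<p} - {a, b}. f k)"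
proof -
  have "(\<Sum>k<p. f k) = f a + (\<Sum>k\<in>{..<p} - {a}. f k)"
    using assms by (simp add: sum.remove)
  also have "(\<Sum>k\<in>{..<p} - {a}. f k) = f b + (\<Sum>k\<in>{..<p} - {a} - {b}. f k)"
    using assms by (intro sum.remove) auto
  also have "{..<p} - {a} - {b} = {..<p} - {a, b}" by auto
  finally show ?thesis by (simp add: add.assoc)
qed

lemma unit_ball_p_sets [measurable]: "unit_ball_p p \<in> sets (lebesgue_p p)"
  unfolding unit_ball_p_def norm_p_def inner_p_def by measurable

lemma emeasure_unit_ball_p: "emeasure (lebesgue_p p) (unit_ball_p p) = ennreal (unit_ball_vol (real p))"
proof -
  have "unit_ball_p p = {f. sqrt (\<Sum>i\<in>{..<p}. (f i)^2) \<le> 1} \<inter> space (Pi\<^sub>M {..<p} (\<lambda>_. lborel))"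
    by (auto simp: unit_ball_p_def norm_p_def inner_p_def lebesgue_p_def power2_eq_square)
  then show ?thesis using emeasure_cball_aux[of "{..<p}" 1] by (simp add: lebesgue_p_def)
qed

lemma prob_space_uniform_unit_ball: "prob_space (uniform_measure (lebesgue_p p) (unit_ball_p p))"
  using unit_ball_vol_pos[of "real p"]
  by (intro prob_space_uniform_measure) (auto simp: emeasure_unit_ball_p simp del: unit_ball_vol_pos)

lemma prob_space_unif_sphere: "prob_space (unif_sphere p)"
  unfolding unif_sphere_def by (rule prob_space.prob_space_distr[OF prob_space_uniform_unit_ball]) simp

lemma sets_unif_sphere [measurable_cong]: "sets (unif_sphere p) = sets (euclid_space p)"
  by (simp add: unif_sphere_def)

lemma measurable_sphere_proj_uniform_unit_ball:
  "sphere_proj p \<in> measurable (uniform_measure (lebesgue_p p) (unit_ball_p p)) (euclid_space p)"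
  using measurable_sphere_proj measurable_cong_sets[OF sets_uniform_measure refl] by blast

lemma abs_sphere_proj_le_1: "k < p \<Longrightarrow> \<bar>sphere_proj p x k\<bar> \<le> 1"
proof (cases "norm_p p x = 0")
  case False
  assume k: "k < p"
  have "\<bar>x k\<bar> \<le> norm_p p x"
    using coordinate_sq_le_inner_p[OF k, of x] unfolding norm_p_def by (simp add: real_le_rsqrt)
  then show ?thesis using False k norm_p_nonneg[of p x] by (simp add: sphere_proj_def abs_div)
qed (simp add: sphere_proj_def)

lemma inner_p_sphere_proj_self: "norm_p p x \<noteq> 0 \<Longrightarrow> inner_p p (sphere_proj p x) (sphere_proj p x) = 1"
proof -
  assume "norm_p p x \<noteq> 0"
  moreover have "inner_p p (sphere_proj p x) (sphere_proj p x) = inner_p p x x / (norm_p p x)^2"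
    unfolding inner_p_def sphere_proj_def by (simp add: sum_divide_distrib power2_eq_square)
  ultimately show ?thesis by (simp add: norm_p_power2) (simp add: norm_p_def)
qed

lemma AE_unif_sphere_coordinate_bound: "AE u in unif_sphere p. \<forall>k\<in>{..<p}. \<bar>u k\<bar> \<le> 1"
  unfolding unif_sphere_def
  by (subst AE_distr_iff) (auto intro!: AE_I2 abs_sphere_proj_le_1 measurable_sphere_proj_uniform_unit_ball)

lemma AE_lebesgue_p_norm_p_nonzero:
  assumes "0 < p" shows "AE x in lebesgue_p p. norm_p p x \<noteq> 0"
proof -
  interpret product_sigma_finite "\<lambda>_. lborel :: real measure" by standard
  define N where "N = PiE {..<p} (\<lambda>i. if i = 0 then {0::real} else UNIV)"
  have "emeasure (lebesgue_p p) N = (\<Prod>i<p. emeasure lborel (if i = 0 then {0::real} else UNIV))"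
    unfolding N_def lebesgue_p_def by (rule emeasure_PiM) auto
  also have "\<dots> = 0" using assms by (intro prod_zero) auto
  finally have "N \<in> null_sets (lebesgue_p p)"
    unfolding N_def lebesgue_p_def by (auto simp: null_sets_def intro!: sets_PiM_I_finite)
  then have "AE x in lebesgue_p p. x 0 \<noteq> 0"
    by (rule AE_I') (auto simp: N_def lebesgue_p_def space_PiM PiE_iff extensional_def)
  then show ?thesis
  proof (rule AE_mp, intro AE_I2 impI)
    fix x :: "nat \<Rightarrow> real" assume "x 0 \<noteq> 0"
    then have "0 < (x 0)^2" by simp
    also have "(x 0)^2 \<le> inner_p p x x" using assms by (rule coordinate_sq_le_inner_p)
    finally show "norm_p p x \<noteq> 0" by (simp add: norm_p_def)
  qed
qed

lemma AE_unif_sphere_inner_p_self: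
  assumes "0 < p" shows "AE u in unif_sphere p. inner_p p u u = 1"
  unfolding unif_sphere_def
proof (subst AE_distr_iff)
  show "AE x in uniform_measure (lebesgue_p p) (unit_ball_p p). inner_p p (sphere_proj p x) (sphere_proj p x) = 1"
    unfolding uniform_measure_def
    by (subst AE_density, measurable)
       (rule AE_mp[OF AE_lebesgue_p_norm_p_nonzero[OF assms]], auto intro!: AE_I2 simp: inner_p_sphere_proj_self)
qed (simp_all add: measurable_sphere_proj_uniform_unit_ball)

section \<open>Invariance under plane rotations and reflections\<close>

lemma measurable_fun_upd_lebesgue_p:
  assumes "a < p" "h \<in> borel_measurable (lebesgue_p p)"
  shows "(\<lambda>x. x(a := h x)) \<in> measurable (lebesgue_p p) (lebesgue_p p)"
  unfolding lebesgue_p_def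
  by (rule measurable_fun_upd[where J="{..<p}"]) (use assms in \<open>auto simp: lebesgue_p_def\<close>)

text \<open>Fubini in the coordinate \<open>a\<close> reduces this to the invariance of \<open>lborel\<close> under
  \<open>y \<mapsto> c + s y\<close> with \<open>\<bar>s\<bar> = 1\<close>, where \<open>c\<close> may depend on the other coordinates.\<close>

lemma nn_integral_lebesgue_p_affine_update:
  fixes \<tau> :: "(nat \<Rightarrow> real) \<Rightarrow> real"
  assumes a: "a < p" and s: "\<bar>s\<bar> = 1" and \<tau>[measurable]: "\<tau> \<in> borel_measurable (lebesgue_p p)"
    and \<tau>_indep: "\<And>x y. \<tau> (x(a := y)) = \<tau> x"
    and f[measurable]: "f \<in> borel_measurable (lebesgue_p p)"
  shows "(\<integral>\<^sup>+x. f (x(a := \<tau> x + s * x a)) \<partial>lebesgue_p p) = (\<integral>\<^sup>+x. f x \<partial>lebesgue_p p)"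
proof -
  interpret product_sigma_finite "\<lambda>_. lborel :: real measure" by standard
  define I where "I = {..<p} - {a}"
  have I: "{..<p} = insert a I" "a \<notin> I" "finite I" using a by (auto simp: I_def)
  have L: "lebesgue_p p = PiM (insert a I) (\<lambda>_. lborel)" by (simp add: lebesgue_p_def I)
  have "(\<lambda>x. x(a := \<tau> x + s * x a)) \<in> measurable (lebesgue_p p) (lebesgue_p p)"
    by (rule measurable_fun_upd_lebesgue_p[OF a]) (use a in measurable)
  from measurable_comp[OF this f]
  have fT: "(\<lambda>x. f (x(a := \<tau> x + s * x a))) \<in> borel_measurable (PiM (insert a I) (\<lambda>_. lborel))"
    by (simp add: L comp_def)
  have f': "f \<in> borel_measurable (PiM (insert a I) (\<lambda>_. lborel))" using f by (simp add: L)
  have "(\<integral>\<^sup>+x. f (x(a := \<tau> x + s * x a)) \<partial>lebesgue_p p)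
      = (\<integral>\<^sup>+x. (\<integral>\<^sup>+y. f ((x(a := y :: real))(a := \<tau> (x(a := y)) + s * y)) \<partial>lborel) \<partial>PiM I (\<lambda>_. lborel))"
    unfolding L using product_nn_integral_insert[OF I(3,2) fT] by simp
  also have "\<dots> = (\<integral>\<^sup>+x. (\<integral>\<^sup>+y. f (x(a := y)) \<partial>lborel) \<partial>PiM I (\<lambda>_. lborel))"
  proof (rule nn_integral_cong)
    fix x :: "nat \<Rightarrow> real" assume x: "x \<in> space (PiM I (\<lambda>_. lborel))"
    have "(\<lambda>y. f (x(a := y))) \<in> borel_measurable borel"
      using measurable_comp[OF measurable_component_update[OF x I(2)] f'] by (simp add: comp_def)
    from nn_integral_real_affine[OF this, of s "\<tau> x"] s
    show "(\<integral>\<^sup>+y. f ((x(a := y))(a := \<tau> (x(a := y)) + s * y)) \<partial>lborel) = (\<integral>\<^sup>+y. f (x(a := y)) \<partial>lborel)"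
      by (auto simp: \<tau>_indep)
  qed
  also have "\<dots> = (\<integral>\<^sup>+x. f x \<partial>lebesgue_p p)"
    unfolding L by (rule product_nn_integral_insert[OF I(3,2) f', symmetric])
  finally show ?thesis .
qed

lemma distr_eq_self_by_nn_integral:
  assumes "\<Phi> \<in> measurable M M"
    and "\<And>f. f \<in> borel_measurable M \<Longrightarrow> (\<integral>\<^sup>+x. f (\<Phi> x) \<partial>M) = (\<integral>\<^sup>+x. f x \<partial>M)"
  shows "distr M M \<Phi> = M"
proof (rule measure_eqI)
  fix A assume "A \<in> sets (distr M M \<Phi>)"
  then have A: "A \<in> sets M" by simp
  have "emeasure (distr M M \<Phi>) A = (\<integral>\<^sup>+x. indicator A x \<partial>distr M M \<Phi>)"
    using A by simp
  also have "\<dots> = (\<integral>\<^sup>+x. indicator A (\<Phi> x) \<partial>M)"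
    using A assms(1) by (intro nn_integral_distr) auto
  also have "\<dots> = emeasure M A" using A assms(2)[of "indicator A"] by simp
  finally show "emeasure (distr M M \<Phi>) A = emeasure M A" .
qed simp

lemma distr_comp_eq_self:
  assumes "f \<in> measurable M M" "g \<in> measurable M M" "distr M M f = M" "distr M M g = M"
  shows "distr M M (g \<circ> f) = M"
  using distr_distr[OF assms(2,1)] assms(3,4) by simp

definition shear :: "nat \<Rightarrow> nat \<Rightarrow> real \<Rightarrow> (nat \<Rightarrow> real) \<Rightarrow> (nat \<Rightarrow> real)" where
  "shear a b \<alpha> x = x(a := \<alpha> * x b + x a)"

definition reflect :: "nat \<Rightarrow> (nat \<Rightarrow> real) \<Rightarrow> (nat \<Rightarrow> real)" where
  "reflect a x = x(a := - x a)"

definition plane_rotation :: "nat \<Rightarrow> nat \<Rightarrow> real \<Rightarrow> real \<Rightarrow> (nat \<Rightarrow> real) \<Rightarrow> (nat \<Rightarrow> real)" where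
  "plane_rotation a b c d x = x(a := c * x a - d * x b, b := d * x a + c * x b)"

lemma measurable_shear [measurable]:
  "a < p \<Longrightarrow> b < p \<Longrightarrow> shear a b \<alpha> \<in> measurable (lebesgue_p p) (lebesgue_p p)"
  unfolding shear_def by (rule measurable_fun_upd_lebesgue_p) measurable

lemma measurable_reflect [measurable]: "a < p \<Longrightarrow> reflect a \<in> measurable (lebesgue_p p) (lebesgue_p p)"
  unfolding reflect_def by (rule measurable_fun_upd_lebesgue_p) measurable

lemma distr_lebesgue_p_shear:
  assumes "a < p" "b < p" "a \<noteq> b"
  shows "distr (lebesgue_p p) (lebesgue_p p) (shear a b \<alpha>) = lebesgue_p p"
proof (rule distr_eq_self_by_nn_integral)
  fix f :: "(nat \<Rightarrow> real) \<Rightarrow> ennreal" assume "f \<in> borel_measurable (lebesgue_p p)"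
  with assms show "(\<integral>\<^sup>+x. f (shear a b \<alpha> x) \<partial>lebesgue_p p) = (\<integral>\<^sup>+x. f x \<partial>lebesgue_p p)"
    using nn_integral_lebesgue_p_affine_update[of a p 1 "\<lambda>x. \<alpha> * x b" f] by (simp add: shear_def)
qed (use assms in measurable)

lemma distr_lebesgue_p_reflect:
  assumes "a < p" shows "distr (lebesgue_p p) (lebesgue_p p) (reflect a) = lebesgue_p p"
proof (rule distr_eq_self_by_nn_integral)
  fix f :: "(nat \<Rightarrow> real) \<Rightarrow> ennreal" assume "f \<in> borel_measurable (lebesgue_p p)"
  with assms show "(\<integral>\<^sup>+x. f (reflect a x) \<partial>lebesgue_p p) = (\<integral>\<^sup>+x. f x \<partial>lebesgue_p p)"
    using nn_integral_lebesgue_p_affine_update[of a p "-1" "\<lambda>_. 0" f] by (simp add: reflect_def)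
qed (use assms in measurable)

text \<open>The classical three-shear factorisation of a rotation, valid away from the angle \<open>\<pi>\<close>.\<close>

lemma plane_rotation_eq_shears:
  assumes cd: "c^2 + d^2 = 1" and c: "c \<noteq> -1" and ab: "a \<noteq> b"
  defines "\<alpha> \<equiv> - d / (1 + c)"
  shows "plane_rotation a b c d = shear a b \<alpha> \<circ> shear b a d \<circ> shear a b \<alpha>"
proof
  fix x
  have ac: "\<alpha> * (1 + c) = - d" using c by (simp add: \<alpha>_def)
  have ad: "\<alpha> * d = c - 1"
  proof -
    have "\<alpha> * d * (1 + c) = (\<alpha> * (1 + c)) * d" by (simp add: algebra_simps)
    also have "\<dots> = - (d * d)" unfolding ac by simp
    also have "\<dots> = (c - 1) * (1 + c)" using cd by (simp add: power2_eq_square algebra_simps)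
    finally show ?thesis using c by simp
  qed
  have "\<alpha> * (d * (\<alpha> * x b + x a) + x b) + (\<alpha> * x b + x a)
      = (\<alpha> * d) * \<alpha> * x b + (\<alpha> * d) * x a + 2 * \<alpha> * x b + x a"
    by (simp add: algebra_simps)
  also have "\<dots> = c * x a + (\<alpha> * (1 + c)) * x b" unfolding ad by (simp add: algebra_simps)
  finally have rot_a: "c * x a - d * x b = \<alpha> * (d * (\<alpha> * x b + x a) + x b) + (\<alpha> * x b + x a)"
    unfolding ac by simp
  have "d * (\<alpha> * x b + x a) + x b = (\<alpha> * d) * x b + d * x a + x b"
    by (simp add: algebra_simps)
  then have rot_b: "d * x a + c * x b = d * (\<alpha> * x b + x a) + x b"
    unfolding ad by (simp add: algebra_simps)
  show "plane_rotation a b c d x = (shear a b \<alpha> \<circ> shear b a d \<circ> shear a b \<alpha>) x"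
    using ab rot_a rot_b by (auto simp: plane_rotation_def shear_def fun_eq_iff)
qed

lemma measurable_plane_rotation [measurable]:
  assumes "a < p" "b < p"
  shows "plane_rotation a b c d \<in> measurable (lebesgue_p p) (lebesgue_p p)"
proof -
  have upd_a: "(\<lambda>x. x(a := c * x a - d * x b)) \<in> measurable (lebesgue_p p) (lebesgue_p p)"
    using assms by (intro measurable_fun_upd_lebesgue_p) auto
  show ?thesis
    unfolding plane_rotation_def lebesgue_p_def
    by (rule measurable_fun_upd[where J="{..<p}", OF _ upd_a[unfolded lebesgue_p_def]])
       (use assms in \<open>auto simp flip: lebesgue_p_def\<close>)
qed

lemma distr_lebesgue_p_plane_rotation:
  assumes "c^2 + d^2 = 1" "c \<noteq> -1" "a \<noteq> b" "a < p" "b < p"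
  shows "distr (lebesgue_p p) (lebesgue_p p) (plane_rotation a b c d) = lebesgue_p p"
  unfolding plane_rotation_eq_shears[OF assms(1-3)]
  using assms by (intro distr_comp_eq_self distr_lebesgue_p_shear measurable_comp[OF measurable_shear measurable_shear]
      measurable_shear) auto

text \<open>The invariance is transported from the uniform distribution on the ball, whose radial
  projection is \<open>unif_sphere\<close>.\<close>

lemma distr_unif_sphere_eq_self:
  assumes m: "\<Phi> \<in> measurable (lebesgue_p p) (lebesgue_p p)"
    and d: "distr (lebesgue_p p) (lebesgue_p p) \<Phi> = lebesgue_p p"
    and norm: "\<And>x. norm_p p (\<Phi> x) = norm_p p x"
    and proj: "\<And>x. sphere_proj p (\<Phi> x) = \<Phi> (sphere_proj p x)"
  shows "distr (unif_sphere p) (euclid_space p) \<Phi> = unif_sphere p"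
proof -
  let ?L = "lebesgue_p p" and ?B = "unit_ball_p p" and ?E = "euclid_space p"
  let ?U = "uniform_measure ?L ?B"
  define g where "g x = indicator ?B x / emeasure ?L ?B" for x
  have g[measurable]: "g \<in> borel_measurable ?L" unfolding g_def by measurable
  have "\<Phi> x \<in> ?B \<longleftrightarrow> x \<in> ?B" if "x \<in> space ?L" for x
    using that m norm[of x] by (auto simp: unit_ball_p_def measurable_def)
  moreover have "(\<lambda>x. g (\<Phi> x)) \<in> borel_measurable ?L" using measurable_comp[OF m g] by (simp add: comp_def)
  ultimately have "density ?L (\<lambda>x. g (\<Phi> x)) = density ?L g"
    by (intro density_cong AE_I2) (auto simp: g_def indicator_def)
  then have U: "distr ?U ?L \<Phi> = ?U"
    using density_distr[OF g m] d unfolding uniform_measure_def g_def by simp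
  have mE: "\<Phi> \<in> measurable ?E ?E"
    using m measurable_cong_sets[OF sets_lebesgue_p sets_lebesgue_p] by blast
  have mU: "\<Phi> \<in> measurable ?U ?L"
    using m measurable_cong_sets[OF sets_uniform_measure refl, of ?L ?B ?L] by blast
  have "distr (unif_sphere p) ?E \<Phi> = distr ?U ?E (\<Phi> \<circ> sphere_proj p)"
    unfolding unif_sphere_def by (rule distr_distr[OF mE measurable_sphere_proj_uniform_unit_ball])
  also have "\<dots> = distr ?U ?E (sphere_proj p \<circ> \<Phi>)"
    by (rule distr_cong) (simp_all add: proj)
  also have "\<dots> = distr (distr ?U ?L \<Phi>) ?E (sphere_proj p)"
    by (rule distr_distr[OF measurable_sphere_proj mU, symmetric])
  also have "\<dots> = unif_sphere p" unfolding U unif_sphere_def ..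
  finally show ?thesis .
qed

lemma inner_p_plane_rotation_transpose:
  assumes "a \<noteq> b" "a < p" "b < p"
  shows "inner_p p x (plane_rotation a b c d y) = inner_p p (plane_rotation a b c (-d) x) y"
proof -
  have "(\<Sum>k\<in>{..<p} - {a, b}. x k * plane_rotation a b c d y k)
      = (\<Sum>k\<in>{..<p} - {a, b}. plane_rotation a b c (-d) x k * y k)"
    by (intro sum.cong) (auto simp: plane_rotation_def)
  then show ?thesis
    unfolding inner_p_def sum_lessThan_remove2[OF assms] using assms
    by (simp add: plane_rotation_def algebra_simps)
qed

lemma inner_p_plane_rotation_self:
  assumes "a \<noteq> b" "a < p" "b < p" "c^2 + d^2 = 1"
  shows "inner_p p (plane_rotation a b c d x) (plane_rotation a b c d x) = inner_p p x x"
proof -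
  have "(\<Sum>k\<in>{..<p} - {a, b}. plane_rotation a b c d x k * plane_rotation a b c d x k)
      = (\<Sum>k\<in>{..<p} - {a, b}. x k * x k)"
    by (intro sum.cong) (auto simp: plane_rotation_def)
  moreover have "(c * x a - d * x b) * (c * x a - d * x b) + (d * x a + c * x b) * (d * x a + c * x b)
      = (c^2 + d^2) * (x a * x a + x b * x b)"
    by (simp add: power2_eq_square algebra_simps)
  ultimately show ?thesis
    unfolding inner_p_def sum_lessThan_remove2[OF assms(1-3)] using assms
    by (simp add: plane_rotation_def)
qed

lemma inner_p_reflect_transpose: "a < p \<Longrightarrow> inner_p p x (reflect a y) = inner_p p (reflect a x) y"
  unfolding inner_p_def by (intro sum.cong) (auto simp: reflect_def)

lemma inner_p_reflect_self: "a < p \<Longrightarrow> inner_p p (reflect a x) (reflect a x) = inner_p p x x"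
  unfolding inner_p_def by (intro sum.cong) (auto simp: reflect_def)

lemma distr_unif_sphere_plane_rotation:
  assumes "a \<noteq> b" "a < p" "b < p" "c^2 + d^2 = 1" "c \<noteq> -1"
  shows "distr (unif_sphere p) (euclid_space p) (plane_rotation a b c d) = unif_sphere p"
proof (rule distr_unif_sphere_eq_self)
  show norm: "norm_p p (plane_rotation a b c d x) = norm_p p x" for x
    using assms by (simp add: norm_p_def inner_p_plane_rotation_self)
  show "sphere_proj p (plane_rotation a b c d x) = plane_rotation a b c d (sphere_proj p x)" for x
    unfolding sphere_proj_def norm using assms
    by (auto simp: fun_eq_iff plane_rotation_def diff_divide_distrib add_divide_distrib)
qed (use assms in \<open>auto intro: distr_lebesgue_p_plane_rotation\<close>)

lemma distr_unif_sphere_reflect: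
  assumes "a < p" shows "distr (unif_sphere p) (euclid_space p) (reflect a) = unif_sphere p"
proof (rule distr_unif_sphere_eq_self)
  show norm: "norm_p p (reflect a x) = norm_p p x" for x
    using assms by (simp add: norm_p_def inner_p_reflect_self)
  show "sphere_proj p (reflect a x) = reflect a (sphere_proj p x)" for x
    unfolding sphere_proj_def norm using assms by (auto simp: fun_eq_iff reflect_def)
qed (use assms in \<open>auto intro: distr_lebesgue_p_reflect\<close>)

lemma integral_unif_sphere_invariant:
  fixes f :: "(nat \<Rightarrow> real) \<Rightarrow> real"
  assumes d: "distr (unif_sphere p) (euclid_space p) \<Phi> = unif_sphere p"
    and m: "\<Phi> \<in> measurable (lebesgue_p p) (lebesgue_p p)"
    and f: "f \<in> borel_measurable (euclid_space p)"
  shows "(\<integral>u. f (\<Phi> u) \<partial>unif_sphere p) = (\<integral>u. f u \<partial>unif_sphere p)"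
proof -
  have "sets (unif_sphere p) = sets (lebesgue_p p)" by (simp add: sets_lebesgue_p sets_unif_sphere)
  from measurable_cong_sets[OF this sets_lebesgue_p[symmetric]] m
  have "\<Phi> \<in> measurable (unif_sphere p) (euclid_space p)" by blast
  from integral_distr[OF this f] show ?thesis by (simp add: d)
qed

definition sphere_inner_integral :: "nat \<Rightarrow> (real \<Rightarrow> real) \<Rightarrow> (nat \<Rightarrow> real) \<Rightarrow> real" where
  "sphere_inner_integral p f s = (\<integral>u. f (inner_p p s u) \<partial>unif_sphere p)"

lemma sphere_inner_integral_plane_rotation:
  assumes f[measurable]: "f \<in> borel_measurable borel"
    and ab: "a \<noteq> b" "a < p" "b < p" and cd: "c^2 + d^2 = 1" "c \<noteq> -1"
  shows "sphere_inner_integral p f (plane_rotation a b c d s) = sphere_inner_integral p f s"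
proof -
  have "sphere_inner_integral p f s = (\<integral>u. f (inner_p p s (plane_rotation a b c (-d) u)) \<partial>unif_sphere p)"
    unfolding sphere_inner_integral_def
    by (rule integral_unif_sphere_invariant[symmetric, where f="\<lambda>u. f (inner_p p s u)"])
       (use ab cd in \<open>auto intro!: distr_unif_sphere_plane_rotation\<close>)
  then show ?thesis
    unfolding sphere_inner_integral_def inner_p_plane_rotation_transpose[OF ab] by simp
qed

lemma sphere_inner_integral_reflect:
  assumes f[measurable]: "f \<in> borel_measurable borel" and a: "a < p"
  shows "sphere_inner_integral p f (reflect a s) = sphere_inner_integral p f s"
proof -
  have "sphere_inner_integral p f s = (\<integral>u. f (inner_p p s (reflect a u)) \<partial>unif_sphere p)"
    unfolding sphere_inner_integral_def
    by (rule integral_unif_sphere_invariant[symmetric, where f="\<lambda>u. f (inner_p p s u)"])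
       (use a in \<open>auto intro!: distr_unif_sphere_reflect\<close>)
  then show ?thesis
    unfolding sphere_inner_integral_def inner_p_reflect_transpose[OF a] by simp
qed

lemma inner_p_supported_first:
  assumes "0 < p" "\<And>i. 1 \<le> i \<Longrightarrow> i < p \<Longrightarrow> s i = 0"
  shows "inner_p p s u = s 0 * u 0"
proof -
  have "inner_p p s u = s 0 * u 0 + (\<Sum>k\<in>{..<p} - {0}. s k * u k)"
    unfolding inner_p_def using assms(1) by (simp add: sum.remove)
  also have "(\<Sum>k\<in>{..<p} - {0}. s k * u k) = 0" using assms(2) by (intro sum.neutral) auto
  finally show ?thesis by simp
qed

lemma sphere_inner_integral_merge_coordinate:
  assumes f: "f \<in> borel_measurable borel" and k: "0 < k" "k < p"
  obtains s' where "sphere_inner_integral p f s = sphere_inner_integral p f s'"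
    and "s' k = 0" and "(s' 0)^2 = (s 0)^2 + (s k)^2" and "\<And>i. i \<noteq> 0 \<Longrightarrow> i \<noteq> k \<Longrightarrow> s' i = s i"
proof (cases "s k = 0")
  case False
  define r where "r = sqrt ((s 0)^2 + (s k)^2)"
  have r2: "r^2 = (s 0)^2 + (s k)^2" unfolding r_def by simp
  have r: "0 < r" unfolding r_def using False by (simp add: add_nonneg_pos)
  define c d where "c = s 0 / r" and "d = - (s k / r)"
  have cd: "c^2 + d^2 = 1"
    unfolding c_def d_def using r r2 False by (simp add: power_divide add_divide_distrib[symmetric])
  have "c \<noteq> -1"
  proof
    assume "c = -1"
    with cd have "d^2 = 0" by simp
    with False r show False unfolding d_def by simp
  qed
  with cd k f have "sphere_inner_integral p f s = sphere_inner_integral p f (plane_rotation 0 k c d s)"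
    by (intro sphere_inner_integral_plane_rotation[symmetric]) auto
  moreover have "plane_rotation 0 k c d s 0 = r" "plane_rotation 0 k c d s k = 0"
    unfolding plane_rotation_def c_def d_def using k r r2
    by (simp_all add: power2_eq_square field_simps)
  ultimately show ?thesis using that r2 k by (simp add: plane_rotation_def)
qed (use that in auto)

lemma sphere_inner_integral_concentrate:
  assumes f: "f \<in> borel_measurable borel"
  shows "1 \<le> k \<Longrightarrow> k \<le> p \<Longrightarrow> (\<And>i. k \<le> i \<Longrightarrow> i < p \<Longrightarrow> s i = 0) \<Longrightarrow>
    sphere_inner_integral p f s = sphere_inner_integral p f (\<lambda>i. if i = 0 then sqrt (\<Sum>i<k. (s i)^2) else 0)"
proof (induction k arbitrary: s rule: dec_induct)
  case base
  then have p: "0 < p" and s: "\<And>i. 1 \<le> i \<Longrightarrow> i < p \<Longrightarrow> s i = 0" by auto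
  have "sphere_inner_integral p f s = sphere_inner_integral p f (\<lambda>i. if i = 0 then \<bar>s 0\<bar> else 0)"
  proof (cases "0 \<le> s 0")
    case False
    have "sphere_inner_integral p f s = sphere_inner_integral p f (reflect 0 s)"
      using sphere_inner_integral_reflect[OF f p] by simp
    then show ?thesis
      unfolding sphere_inner_integral_def using False s
      by (simp add: inner_p_supported_first[OF p] reflect_def)
  qed (simp add: sphere_inner_integral_def inner_p_supported_first[OF p] s)
  moreover have "sqrt (\<Sum>i<1. (s i)^2) = \<bar>s 0\<bar>" by (simp add: lessThan_Suc)
  ultimately show ?case by (simp only:)
next
  case (step k)
  obtain s' where s': "sphere_inner_integral p f s = sphere_inner_integral p f s'"
    "s' k = 0" "(s' 0)^2 = (s 0)^2 + (s k)^2" "\<And>i. i \<noteq> 0 \<Longrightarrow> i \<noteq> k \<Longrightarrow> s' i = s i"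
    using sphere_inner_integral_merge_coordinate[OF f, of k p s] step.hyps step.prems by auto
  have "(\<Sum>i<k. (s' i)^2) = (s' 0)^2 + (\<Sum>i\<in>{..<k} - {0}. (s' i)^2)"
    using step.hyps by (subst sum.remove[of _ 0]) auto
  also have "(\<Sum>i\<in>{..<k} - {0}. (s' i)^2) = (\<Sum>i\<in>{..<k} - {0}. (s i)^2)"
    using s'(4) by (intro sum.cong) auto
  also have "(s' 0)^2 + (\<Sum>i\<in>{..<k} - {0}. (s i)^2) = (\<Sum>i<Suc k. (s i)^2)"
    using step.hyps s'(3) by (simp add: sum.remove[of "{..<k}" 0])
  finally have "(\<Sum>i<k. (s' i)^2) = (\<Sum>i<Suc k. (s i)^2)" .
  moreover have "s' i = 0" if "k \<le> i" "i < p" for i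
    using that s' step.prems(2)[of i] step.hyps by (cases "i = k") auto
  ultimately show ?case using step.IH[of s'] step.prems s'(1) by (simp cong: if_cong)
qed

lemma sphere_inner_integral_eq_first_coordinate:
  assumes f: "f \<in> borel_measurable borel" and p: "0 < p"
  shows "sphere_inner_integral p f s = (\<integral>u. f (norm_p p s * u 0) \<partial>unif_sphere p)"
proof -
  have "sqrt (\<Sum>i<p. (s i)^2) = norm_p p s"
    by (simp add: norm_p_def inner_p_def power2_eq_square)
  then have "sphere_inner_integral p f s = sphere_inner_integral p f (\<lambda>i. if i = 0 then norm_p p s else 0)"
    using sphere_inner_integral_concentrate[OF f, of p p s] p by (simp only:)
  then show ?thesis unfolding sphere_inner_integral_def using p by (simp add: inner_p_supported_first)
qed

section \<open>Moments of a linear functional of a uniform vector\<close>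

definition unit_vec :: "nat \<Rightarrow> nat \<Rightarrow> real" where
  "unit_vec a = (\<lambda>i. if i = a then 1 else 0)"

lemma inner_p_unit_vec: "a < p \<Longrightarrow> inner_p p (unit_vec a) u = u a"
proof -
  have "inner_p p (unit_vec a) u = (\<Sum>k<p. if k = a then u k else 0)"
    unfolding inner_p_def unit_vec_def by (rule sum.cong) auto
  then show "a < p \<Longrightarrow> ?thesis" by simp
qed

lemma norm_p_unit_vec: "a < p \<Longrightarrow> norm_p p (unit_vec a) = 1"
  using inner_p_unit_vec[of a p "unit_vec a"] by (simp add: norm_p_def unit_vec_def)

locale sphere_dim =
  fixes p :: nat
  assumes p_pos: "0 < p"
begin

abbreviation "\<mu> \<equiv> unif_sphere p"

sublocale P: prob_space \<mu> by (rule prob_space_unif_sphere)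

lemma integrable_unif_sphere_bounded:
  fixes f :: "(nat \<Rightarrow> real) \<Rightarrow> real"
  assumes "f \<in> borel_measurable (euclid_space p)"
    and "\<And>u. \<forall>k\<in>{..<p}. \<bar>u k\<bar> \<le> 1 \<Longrightarrow> \<bar>f u\<bar> \<le> K"
  shows "integrable \<mu> f"
proof (rule P.integrable_const_bound[where B=K])
  show "AE u in \<mu>. norm (f u) \<le> K"
    using AE_unif_sphere_coordinate_bound[of p] by (rule AE_mp) (auto intro!: AE_I2 assms(2))
qed (use assms(1) in \<open>simp add: measurable_cong_sets[OF sets_unif_sphere refl]\<close>)

lemma integrable_coordinate_powers: "a < p \<Longrightarrow> b < p \<Longrightarrow> integrable \<mu> (\<lambda>u. (u a)^m * (u b)^n)"
  by (rule integrable_unif_sphere_bounded[where K=1])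
     (auto intro!: mult_le_one power_le_one simp: abs_mult power_abs)

lemma abs_inner_p_le: "\<forall>k\<in>{..<p}. \<bar>u k\<bar> \<le> 1 \<Longrightarrow> \<bar>inner_p p s u\<bar> \<le> (\<Sum>k<p. \<bar>s k\<bar>)"
  unfolding inner_p_def
  by (rule order_trans[OF sum_abs]) (auto intro!: sum_mono simp: abs_mult intro: mult_left_le)

lemma integrable_inner_power: "integrable \<mu> (\<lambda>u. (inner_p p s u)^n)"
  by (rule integrable_unif_sphere_bounded[where K="(\<Sum>k<p. \<bar>s k\<bar>)^n"])
     (auto simp: power_abs intro!: power_mono abs_inner_p_le)

lemma integral_odd_eq_0:
  fixes g :: "(nat \<Rightarrow> real) \<Rightarrow> real"
  assumes "a < p" "g \<in> borel_measurable (euclid_space p)" "\<And>u. g (reflect a u) = - g u"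
  shows "(\<integral>u. g u \<partial>\<mu>) = 0"
proof -
  have "(\<integral>u. g (reflect a u) \<partial>\<mu>) = (\<integral>u. g u \<partial>\<mu>)"
    using assms(1,2) by (intro integral_unif_sphere_invariant distr_unif_sphere_reflect measurable_reflect)
  then show ?thesis unfolding assms(3) by simp
qed

lemma integral_inner_power: "(\<integral>u. (inner_p p s u)^n \<partial>\<mu>) = (norm_p p s)^n * (\<integral>u. (u 0)^n \<partial>\<mu>)"
proof -
  have "(\<integral>u. (inner_p p s u)^n \<partial>\<mu>) = (\<integral>u. (norm_p p s * u 0)^n \<partial>\<mu>)"
    using sphere_inner_integral_eq_first_coordinate[OF _ p_pos, of "\<lambda>x. x^n" s]
    unfolding sphere_inner_integral_def by simp
  then show ?thesis by (simp add: power_mult_distrib)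
qed

lemma integral_coordinate_power: "a < p \<Longrightarrow> (\<integral>u. (u a)^n \<partial>\<mu>) = (\<integral>u. (u 0)^n \<partial>\<mu>)"
  using integral_inner_power[of "unit_vec a" n] by (simp add: inner_p_unit_vec norm_p_unit_vec)

lemma integral_inner_p_self_power: "(\<integral>u. (inner_p p u u)^n \<partial>\<mu>) = 1"
proof -
  have "(\<integral>u. (inner_p p u u)^n \<partial>\<mu>) = (\<integral>u. 1 \<partial>\<mu>)"
    by (rule integral_cong_AE) (use AE_unif_sphere_inner_p_self[OF p_pos] in auto)
  then show ?thesis by (simp add: P.prob_space)
qed

lemma integral_coordinate_sq: "(\<integral>u. (u 0)^2 \<partial>\<mu>) = 1 / p"
proof -
  have "1 = (\<integral>u. inner_p p u u \<partial>\<mu>)" using integral_inner_p_self_power[of 1] by simp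
  also have "\<dots> = (\<Sum>k<p. \<integral>u. (u k)^2 \<partial>\<mu>)"
    unfolding inner_p_def power2_eq_square
    by (rule Bochner_Integration.integral_sum) (use integrable_coordinate_powers[of _ _ 1 1] in auto)
  also have "\<dots> = (\<Sum>k<p. \<integral>u. (u 0)^2 \<partial>\<mu>)"
    by (intro sum.cong refl integral_coordinate_power) simp
  also have "\<dots> = p * (\<integral>u. (u 0)^2 \<partial>\<mu>)" by simp
  finally show ?thesis using p_pos by (simp add: field_simps)
qed

text \<open>Expand \<open>\<integral>(u a + u b)\<^sup>4 = \<bar>e\<^sub>a + e\<^sub>b\<bar>\<^sup>4 \<integral>(u 0)\<^sup>4\<close>; the odd mixed moments vanish by reflection.\<close>

lemma integral_coordinate_sq_sq:
  assumes ab: "a < p" "b < p" "a \<noteq> b"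
  shows "(\<integral>u. (u a)^2 * (u b)^2 \<partial>\<mu>) = (\<integral>u. (u 0)^4 \<partial>\<mu>) / 3"
proof -
  let ?m4 = "\<integral>u. (u 0)^4 \<partial>\<mu>"
  define s where "s = (\<lambda>i. unit_vec a i + unit_vec b i)"
  have s: "inner_p p s v = v a + v b" for v
    unfolding s_def inner_p_add_left using ab by (simp add: inner_p_unit_vec)
  have "inner_p p s s = 2" using s[of s] ab by (simp add: s_def unit_vec_def)
  moreover have "(norm_p p s)^4 = ((norm_p p s)^2)^2" by (simp flip: power_mult)
  ultimately have "(norm_p p s)^4 = 4" by (simp add: norm_p_power2)
  then have "4 * ?m4 = (\<integral>u. (u a + u b)^4 \<partial>\<mu>)" using integral_inner_power[of s 4] by (simp add: s)
  also have "\<dots> = (\<integral>u. (u a)^4 \<partial>\<mu>) + 4 * (\<integral>u. (u a)^3 * u b \<partial>\<mu>) + 6 * (\<integral>u. (u a)^2 * (u b)^2 \<partial>\<mu>)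
      + 4 * (\<integral>u. u a * (u b)^3 \<partial>\<mu>) + (\<integral>u. (u b)^4 \<partial>\<mu>)"
  proof -
    have "(x + y)^4 = x^4 + 4 * (x^3 * y) + 6 * (x^2 * y^2) + 4 * (x * y^3) + y^4" for x y :: real
      by (simp add: power_def eval_nat_numeral algebra_simps)
    then show ?thesis
      using ab integrable_coordinate_powers[of a a 4 0] integrable_coordinate_powers[of b b 4 0]
        integrable_coordinate_powers[of a b 3 1] integrable_coordinate_powers[of a b 2 2]
        integrable_coordinate_powers[of a b 1 3]
      by simp
  qed
  also have "\<dots> = 2 * ?m4 + 6 * (\<integral>u. (u a)^2 * (u b)^2 \<partial>\<mu>)"
    using integral_coordinate_power[OF ab(1), of 4] integral_coordinate_power[OF ab(2), of 4] ab
      integral_odd_eq_0[of b "\<lambda>u. (u a)^3 * u b"] integral_odd_eq_0[of a "\<lambda>u. u a * (u b)^3"]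
    by (simp add: reflect_def)
  finally show ?thesis by simp
qed

lemma integral_coordinate_pow4: "(\<integral>u. (u 0)^4 \<partial>\<mu>) = 3 / (p * (p + 2))"
proof -
  let ?m4 = "\<integral>u. (u 0)^4 \<partial>\<mu>"
  have int: "integrable \<mu> (\<lambda>u. (u a)^2 * (u b)^2)" if "a < p" "b < p" for a b
    using integrable_coordinate_powers that by blast
  have row: "(\<Sum>b<p. \<integral>u. (u a)^2 * (u b)^2 \<partial>\<mu>) = ?m4 + (p - 1) * (?m4 / 3)" if a: "a < p" for a
  proof -
    have "(\<Sum>b<p. \<integral>u. (u a)^2 * (u b)^2 \<partial>\<mu>)
        = (\<integral>u. (u a)^4 \<partial>\<mu>) + (\<Sum>b\<in>{..<p} - {a}. \<integral>u. (u a)^2 * (u b)^2 \<partial>\<mu>)"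
      using a by (subst sum.remove[of _ a]) (auto simp flip: power_add)
    also have "\<dots> = ?m4 + (\<Sum>b\<in>{..<p} - {a}. ?m4 / 3)"
      using a integral_coordinate_power[OF a, of 4]
      by (simp only:) (intro arg_cong[where f="(+) _"] sum.cong refl integral_coordinate_sq_sq, auto)
    finally show ?thesis using a by simp
  qed
  have "(inner_p p u u)^2 = (\<Sum>a<p. \<Sum>b<p. (u a)^2 * (u b)^2)" for u
    unfolding inner_p_def power2_eq_square[of "sum _ _"] sum_product by (simp add: power2_eq_square)
  then have "1 = (\<integral>u. (\<Sum>a<p. \<Sum>b<p. (u a)^2 * (u b)^2) \<partial>\<mu>)"
    using integral_inner_p_self_power[of 2] by simp
  also have "\<dots> = (\<Sum>a<p. \<Sum>b<p. \<integral>u. (u a)^2 * (u b)^2 \<partial>\<mu>)"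
    using int by (subst Bochner_Integration.integral_sum)
      (auto intro!: Bochner_Integration.integral_sum Bochner_Integration.integrable_sum)
  also have "\<dots> = p * (p + 2) * ?m4 / 3" using p_pos by (simp add: row of_nat_diff field_simps add_pos_pos)
  finally have "1 = p * (p + 2) * ?m4 / 3" .
  moreover have "real p * (real p + 2) \<noteq> 0" using p_pos by simp
  ultimately show ?thesis by (simp add: field_simps)
qed

lemma integral_inner: "(\<integral>u. inner_p p s u \<partial>\<mu>) = 0"
proof -
  have "(\<integral>u. u 0 \<partial>\<mu>) = 0"
    by (rule integral_odd_eq_0[OF p_pos]) (use p_pos in \<open>measurable, simp add: reflect_def\<close>)
  then show ?thesis using integral_inner_power[of s 1] by simp
qed

lemma integral_inner_sq: "(\<integral>u. (inner_p p s u)^2 \<partial>\<mu>) = inner_p p s s / p"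
  using integral_inner_power[of s 2] by (simp add: norm_p_power2 integral_coordinate_sq)

lemma integral_inner_cube: "(\<integral>u. (inner_p p s u)^3 \<partial>\<mu>) = 0"
proof -
  have "(\<integral>u. (u 0)^3 \<partial>\<mu>) = 0"
    by (rule integral_odd_eq_0[OF p_pos]) (use p_pos in \<open>measurable, simp add: reflect_def\<close>)
  then show ?thesis using integral_inner_power[of s 3] by simp
qed

lemma integral_inner_pow4_le: "(\<integral>u. (inner_p p s u)^4 \<partial>\<mu>) \<le> 3 * (inner_p p s s)^2 / p^2"
proof -
  have "(\<integral>u. (inner_p p s u)^4 \<partial>\<mu>) = (inner_p p s s)^2 * (3 / (p * (p + 2)))"
    using integral_inner_power[of s 4]
    by (simp add: integral_coordinate_pow4 flip: norm_p_power2 power_mult)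
  also have "\<dots> \<le> (inner_p p s s)^2 * (3 / p^2)"
    using p_pos by (intro mult_left_mono) (auto simp: power2_eq_square frac_le)
  finally show ?thesis by (simp add: mult.commute)
qed

end

lemma (in prob_space) norm_expectation_iexp_taylor3_le:
  fixes X :: "'a \<Rightarrow> real"
  assumes X[measurable]: "X \<in> borel_measurable M" and int: "\<And>n. integrable M (\<lambda>x. (X x)^n)"
  shows "cmod ((CLINT x|M. iexp (X x))
      - (complex_of_real (1 - expectation (\<lambda>x. (X x)^2) / 2)
         + \<i> * complex_of_real (expectation X - expectation (\<lambda>x. (X x)^3) / 6)))
    \<le> expectation (\<lambda>x. (X x)^4) / 24"
proof -
  define A where "A x = 1 - (X x)^2/2" for x
  define B where "B x = X x - (X x)^3/6" for x
  define Q where "Q y = complex_of_real (1 - y^2/2) + \<i> * complex_of_real (y - y^3/6)" for y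
  have QAB: "Q (X x) = complex_of_real (A x) + \<i> * complex_of_real (B x)" for x
    by (simp add: Q_def A_def B_def)
  have iA: "integrable M A" and iB: "integrable M B"
    unfolding A_def B_def using int[of 2] int[of 3] int[of 1] by auto
  then have iQ: "integrable M (\<lambda>x. Q (X x))"
    unfolding QAB by (intro Bochner_Integration.integrable_add integrable_mult_right integrable_of_real)
  have "(CLINT x|M. Q (X x)) = complex_of_real (expectation A) + \<i> * complex_of_real (expectation B)"
    unfolding QAB using iA iB
    by (subst Bochner_Integration.integral_add) (auto intro: integrable_mult_right integrable_of_real)
  also have "expectation A = 1 - expectation (\<lambda>x. (X x)^2) / 2"
    unfolding A_def using int[of 2] by (simp add: prob_space)
  also have "expectation B = expectation X - expectation (\<lambda>x. (X x)^3) / 6"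
    unfolding B_def using int[of 1] int[of 3] by simp
  finally have IQ: "(CLINT x|M. Q (X x)) = complex_of_real (1 - expectation (\<lambda>x. (X x)^2) / 2)
      + \<i> * complex_of_real (expectation X - expectation (\<lambda>x. (X x)^3) / 6)" .
  have iE: "integrable M (\<lambda>x. iexp (X x))"
    by (rule integrable_const_bound[where B=1]) (auto simp: norm_exp_i_times)
  have "cmod ((CLINT x|M. iexp (X x)) - (CLINT x|M. Q (X x))) \<le> (\<integral>x. cmod (iexp (X x) - Q (X x)) \<partial>M)"
    using iE iQ by (simp flip: Bochner_Integration.integral_diff add: integral_norm_bound)
  also have "\<dots> \<le> (\<integral>x. (X x)^4 / 24 \<partial>M)"
  proof (rule integral_mono)
    fix x
    have "(\<Sum>k \<le> 3. (\<i> * complex_of_real (X x))^k / fact k) = Q (X x)"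
      by (simp add: Q_def eval_nat_numeral atMost_Suc field_simps complex_eq_iff)
    with iexp_approx1[of "X x" 3] show "cmod (iexp (X x) - Q (X x)) \<le> (X x)^4 / 24"
      by (simp add: numeral_eq_Suc fact_numeral power_even_abs)
  qed (use iE iQ int[of 4] in auto)
  finally show ?thesis using int[of 4] by (simp add: IQ)
qed

context sphere_dim
begin

lemma norm_char_inner_approx:
  "cmod ((CLINT u|\<mu>. iexp (\<tau> * inner_p p s u)) - complex_of_real (1 - \<tau>^2 * inner_p p s s / (2 * p)))
     \<le> \<tau>^4 * (inner_p p s s)^2 / (8 * p^2)"
proof -
  have int: "integrable \<mu> (\<lambda>u. (\<tau> * inner_p p s u)^n)" for n
    unfolding power_mult_distrib by (intro integrable_mult_right integrable_inner_power)
  have "(\<lambda>u. \<tau> * inner_p p s u) \<in> borel_measurable \<mu>"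
    by (simp add: measurable_cong_sets[OF sets_unif_sphere refl])
  from P.norm_expectation_iexp_taylor3_le[OF this int]
  have "cmod ((CLINT u|\<mu>. iexp (\<tau> * inner_p p s u)) - complex_of_real (1 - \<tau>^2 * inner_p p s s / (2 * p)))
      \<le> \<tau>^4 * (\<integral>u. (inner_p p s u)^4 \<partial>\<mu>) / 24"
    by (simp add: power_mult_distrib integral_inner integral_inner_sq integral_inner_cube mult.commute[of _ 2])
  also have "\<dots> \<le> \<tau>^4 * (3 * (inner_p p s s)^2 / p^2) / 24"
    by (intro divide_right_mono mult_left_mono integral_inner_pow4_le) auto
  finally show ?thesis by simp
qed

end

section \<open>Partial sums of independent uniform vectors\<close>

lemma norm_integral_le_integral:
  fixes f :: "'a \<Rightarrow> 'b::{banach, second_countable_topology}"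
  assumes bound: "\<And>x. x \<in> space M \<Longrightarrow> norm (f x) \<le> g x" and g: "integrable M g"
  shows "norm (integral\<^sup>L M f) \<le> integral\<^sup>L M g"
proof (cases "integrable M f")
  case True
  have "norm (integral\<^sup>L M f) \<le> (\<integral>x. norm (f x) \<partial>M)" by (rule integral_norm_bound)
  also have "\<dots> \<le> integral\<^sup>L M g" using True g bound by (intro integral_mono) auto
  finally show ?thesis .
next
  case False
  then have "integral\<^sup>L M f = 0" by (rule not_integrable_integral_eq)
  moreover have "0 \<le> integral\<^sup>L M g"
    using bound by (intro integral_nonneg_AE AE_I2) (auto intro: order_trans[OF norm_ge_zero])
  ultimately show ?thesis by simp
qed

context sphere_dim
begin

definition samples :: "nat \<Rightarrow> (nat \<Rightarrow> nat \<Rightarrow> real) measure" where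
  "samples k = PiM {1..k} (\<lambda>_. \<mu>)"

definition partial_sum :: "nat \<Rightarrow> (nat \<Rightarrow> nat \<Rightarrow> real) \<Rightarrow> nat \<Rightarrow> real" where
  "partial_sum k \<omega> = (\<lambda>c. \<Sum>i\<in>{1..k}. \<omega> i c)"

definition sq_partial_sum :: "nat \<Rightarrow> (nat \<Rightarrow> nat \<Rightarrow> real) \<Rightarrow> real" where
  "sq_partial_sum k \<omega> = inner_p p (partial_sum k \<omega>) (partial_sum k \<omega>)"

lemma prob_space_samples: "prob_space (samples k)"
  unfolding samples_def by (intro prob_space_PiM P.prob_space_axioms)

lemma integral_samples_Suc:
  fixes f :: "(nat \<Rightarrow> nat \<Rightarrow> real) \<Rightarrow> 'b::{banach, second_countable_topology}"
  assumes "integrable (samples (Suc k)) f"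
  shows "integral\<^sup>L (samples (Suc k)) f = (\<integral>x. (\<integral>u. f (x(Suc k := u)) \<partial>\<mu>) \<partial>samples k)"
proof -
  interpret product_sigma_finite "\<lambda>_. \<mu>" by standard
  have "{1..Suc k} = insert (Suc k) {1..k}" by auto
  with assms show ?thesis unfolding samples_def by (simp add: product_integral_insert)
qed

lemma measurable_sample_coordinate [measurable]:
  "i \<in> {1..m} \<Longrightarrow> c < p \<Longrightarrow> (\<lambda>\<omega>. \<omega> i c) \<in> borel_measurable (samples m)"
  using measurable_comp[OF measurable_component_singleton[of i "{1..m}" "\<lambda>_. \<mu>"],
      of "\<lambda>u. u c" borel]
  by (simp add: samples_def comp_def measurable_cong_sets[OF sets_unif_sphere refl])

lemma measurable_partial_sum: "k \<le> m \<Longrightarrow> c < p \<Longrightarrow> (\<lambda>\<omega>. partial_sum k \<omega> c) \<in> borel_measurable (samples m)"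
  unfolding partial_sum_def by (intro borel_measurable_sum measurable_sample_coordinate) auto

lemma measurable_sq_partial_sum: "k \<le> m \<Longrightarrow> sq_partial_sum k \<in> borel_measurable (samples m)"
  unfolding sq_partial_sum_def inner_p_def
  by (intro borel_measurable_sum borel_measurable_times measurable_partial_sum) auto

lemma partial_sum_fun_upd: "k < j \<Longrightarrow> partial_sum k (x(j := u)) = partial_sum k x"
  unfolding partial_sum_def by (intro ext sum.cong) auto

lemma sq_partial_sum_fun_upd: "k < j \<Longrightarrow> sq_partial_sum k (x(j := u)) = sq_partial_sum k x"
  unfolding sq_partial_sum_def by (simp add: partial_sum_fun_upd)

lemma partial_sum_Suc: "partial_sum (Suc k) x = (\<lambda>c. partial_sum k x c + x (Suc k) c)"
  unfolding partial_sum_def by (simp add: fun_eq_iff)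

lemma sq_partial_sum_Suc:
  "sq_partial_sum (Suc k) x = sq_partial_sum k x + 2 * inner_p p (partial_sum k x) (x (Suc k))
     + inner_p p (x (Suc k)) (x (Suc k))"
  unfolding sq_partial_sum_def partial_sum_Suc inner_p_self_add ..

lemma sq_partial_sum_0: "sq_partial_sum 0 x = 0"
  by (simp add: sq_partial_sum_def partial_sum_def inner_p_def)

lemma sq_partial_sum_nonneg: "0 \<le> sq_partial_sum k x"
  unfolding sq_partial_sum_def by (rule inner_p_self_nonneg)

lemma AE_samples_coordinate_bound: "AE \<omega> in samples m. \<forall>i\<in>{1..m}. \<forall>c\<in>{..<p}. \<bar>\<omega> i c\<bar> \<le> 1"
  unfolding samples_def
  by (subst AE_finite_all) (auto intro!: AE_PiM_component prob_space_unif_sphere AE_unif_sphere_coordinate_bound)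

lemma AE_samples_inner_p_self: "AE \<omega> in samples m. \<forall>i\<in>{1..m}. inner_p p (\<omega> i) (\<omega> i) = 1"
  unfolding samples_def
  by (subst AE_finite_all) (auto intro!: AE_PiM_component prob_space_unif_sphere AE_unif_sphere_inner_p_self p_pos)

lemma integrable_samples_bounded:
  fixes f :: "(nat \<Rightarrow> nat \<Rightarrow> real) \<Rightarrow> real"
  assumes "f \<in> borel_measurable (samples m)"
    and "\<And>\<omega>. \<forall>i\<in>{1..m}. \<forall>c\<in>{..<p}. \<bar>\<omega> i c\<bar> \<le> 1 \<Longrightarrow> \<bar>f \<omega>\<bar> \<le> K"
  shows "integrable (samples m) f"
proof -
  interpret Q: prob_space "samples m" by (rule prob_space_samples)
  show ?thesis
    by (rule Q.integrable_const_bound[where B=K], rule AE_mp[OF AE_samples_coordinate_bound[of m]])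
       (auto intro!: AE_I2 assms)
qed

lemma abs_sq_partial_sum_le:
  assumes k: "k \<le> m" and bound: "\<forall>i\<in>{1..m}. \<forall>c\<in>{..<p}. \<bar>\<omega> i c\<bar> \<le> 1"
  shows "\<bar>sq_partial_sum k \<omega>\<bar> \<le> p * k^2"
proof -
  have "\<bar>partial_sum k \<omega> c\<bar> \<le> k" if "c < p" for c
  proof -
    have "\<bar>partial_sum k \<omega> c\<bar> \<le> (\<Sum>i\<in>{1..k}. \<bar>\<omega> i c\<bar>)" unfolding partial_sum_def by (rule sum_abs)
    also have "\<dots> \<le> (\<Sum>i\<in>{1..k}. 1)" using k bound that by (intro sum_mono) auto
    finally show ?thesis by simp
  qed
  then have "\<bar>partial_sum k \<omega> c * partial_sum k \<omega> c\<bar> \<le> real k * k" if "c < p" for c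
    unfolding abs_mult using that by (intro mult_mono) auto
  then have "(\<Sum>c<p. \<bar>partial_sum k \<omega> c * partial_sum k \<omega> c\<bar>) \<le> (\<Sum>c<p. real k * k)"
    by (intro sum_mono) auto
  then show ?thesis
    unfolding sq_partial_sum_def inner_p_def
    using sum_abs[of "\<lambda>c. partial_sum k \<omega> c * partial_sum k \<omega> c" "{..<p}"] by (simp add: power2_eq_square)
qed

lemma integrable_sq_partial_sum: "k \<le> m \<Longrightarrow> integrable (samples m) (sq_partial_sum k)"
  by (rule integrable_samples_bounded[OF measurable_sq_partial_sum abs_sq_partial_sum_le])

lemma integrable_sq_partial_sum_mult:
  assumes "a \<le> m" "b \<le> m"
  shows "integrable (samples m) (\<lambda>\<omega>. sq_partial_sum a \<omega> * sq_partial_sum b \<omega>)"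
proof (rule integrable_samples_bounded[where K="real (p * a^2) * real (p * b^2)"])
  fix \<omega> :: "nat \<Rightarrow> nat \<Rightarrow> real" assume "\<forall>i\<in>{1..m}. \<forall>c\<in>{..<p}. \<bar>\<omega> i c\<bar> \<le> 1"
  with assms show "\<bar>sq_partial_sum a \<omega> * sq_partial_sum b \<omega>\<bar> \<le> real (p * a^2) * real (p * b^2)"
    unfolding abs_mult by (intro mult_mono abs_sq_partial_sum_le) auto
qed (use assms in \<open>intro borel_measurable_times measurable_sq_partial_sum\<close>)

lemma integral_samples_eq_if_independent:
  fixes f :: "(nat \<Rightarrow> nat \<Rightarrow> real) \<Rightarrow> real"
  assumes indep: "\<And>j x u. k < j \<Longrightarrow> f (x(j := u)) = f x"
    and int: "\<And>m. k \<le> m \<Longrightarrow> integrable (samples m) f"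
  shows "k \<le> m \<Longrightarrow> integral\<^sup>L (samples m) f = integral\<^sup>L (samples k) f"
proof (induction m rule: dec_induct)
  case (step m)
  have "integral\<^sup>L (samples (Suc m)) f = integral\<^sup>L (samples m) f"
    using integral_samples_Suc[OF int] step.hyps indep by (simp add: P.prob_space)
  then show ?case using step.IH by simp
qed simp

lemma integral_sq_partial_sum_step:
  assumes f: "f \<in> borel_measurable borel"
  shows "(\<integral>u. f (sq_partial_sum (Suc k) (x(Suc k := u))) \<partial>\<mu>)
    = (\<integral>u. f (sq_partial_sum k x + 1 + 2 * inner_p p (partial_sum k x) u) \<partial>\<mu>)"
proof (rule integral_cong_AE)
  show "AE u in \<mu>. f (sq_partial_sum (Suc k) (x(Suc k := u)))
      = f (sq_partial_sum k x + 1 + 2 * inner_p p (partial_sum k x) u)"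
    using AE_unif_sphere_inner_p_self[OF p_pos]
    by (rule AE_mp) (intro AE_I2, simp add: sq_partial_sum_Suc sq_partial_sum_fun_upd partial_sum_fun_upd ac_simps)
qed (use f in \<open>simp_all add: sq_partial_sum_Suc sq_partial_sum_fun_upd partial_sum_fun_upd
      measurable_cong_sets[OF sets_unif_sphere refl]\<close>)

lemma integral_sq_partial_sum_Suc_cond:
  "(\<integral>u. sq_partial_sum (Suc k) (x(Suc k := u)) \<partial>\<mu>) = sq_partial_sum k x + 1"
  using integral_sq_partial_sum_step[of "\<lambda>y. y" k x] integrable_inner_power[of "partial_sum k x" 1]
  by (simp add: integral_inner P.prob_space)

lemma integral_sq_partial_sum_Suc_sq_cond:
  "(\<integral>u. (sq_partial_sum (Suc k) (x(Suc k := u)))^2 \<partial>\<mu>)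
    = (sq_partial_sum k x + 1)^2 + 4 * sq_partial_sum k x / p"
proof -
  let ?Q = "sq_partial_sum k x + 1" and ?X = "\<lambda>u. inner_p p (partial_sum k x) u"
  have "(\<integral>u. (sq_partial_sum (Suc k) (x(Suc k := u)))^2 \<partial>\<mu>) = (\<integral>u. (?Q + 2 * ?X u)^2 \<partial>\<mu>)"
    using integral_sq_partial_sum_step[of "\<lambda>y. y^2" k x] by simp
  also have "\<dots> = (\<integral>u. ?Q^2 + 4 * ?Q * ?X u + 4 * (?X u)^2 \<partial>\<mu>)"
    by (simp add: power2_eq_square algebra_simps)
  also have "\<dots> = ?Q^2 + 4 * sq_partial_sum k x / p"
    using integrable_inner_power[of "partial_sum k x" 1] integrable_inner_power[of "partial_sum k x" 2]
    by (simp add: integral_inner integral_inner_sq P.prob_space sq_partial_sum_def)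
  finally show ?thesis .
qed

lemma integral_sq_partial_sum:
  "(\<integral>\<omega>. sq_partial_sum k \<omega> \<partial>samples k) = k"
proof (induction k)
  case (Suc k)
  interpret Q: prob_space "samples k" by (rule prob_space_samples)
  have "(\<integral>\<omega>. sq_partial_sum (Suc k) \<omega> \<partial>samples (Suc k)) = (\<integral>x. sq_partial_sum k x + 1 \<partial>samples k)"
    by (simp add: integral_samples_Suc integrable_sq_partial_sum integral_sq_partial_sum_Suc_cond)
  also have "\<dots> = k + 1"
    using Suc integrable_sq_partial_sum[of k k] by (simp add: Q.prob_space)
  finally show ?case by simp
qed (simp add: sq_partial_sum_0)

lemma integral_sq_partial_sum_sq:
  "(\<integral>\<omega>. (sq_partial_sum k \<omega>)^2 \<partial>samples k) = k^2 + 2 * k * (k - 1) / p"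
proof (induction k)
  case (Suc k)
  interpret Q: prob_space "samples k" by (rule prob_space_samples)
  have int: "integrable (samples m) (\<lambda>\<omega>. (sq_partial_sum m \<omega>)^2)" for m
    using integrable_sq_partial_sum_mult[of m m m] by (simp add: power2_eq_square)
  have "(\<integral>\<omega>. (sq_partial_sum (Suc k) \<omega>)^2 \<partial>samples (Suc k))
      = (\<integral>x. (sq_partial_sum k x)^2 + (2 + 4 / p) * sq_partial_sum k x + 1 \<partial>samples k)"
    unfolding integral_samples_Suc[OF int] integral_sq_partial_sum_Suc_sq_cond
    by (simp add: power2_eq_square algebra_simps add_divide_distrib)
  also have "\<dots> = k^2 + 2 * k * (k - 1) / p + (2 + 4 / p) * k + 1"
    using Suc int[of k] integrable_sq_partial_sum[of k k] integral_sq_partial_sum[of k]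
    by (cases "k = 0") (simp_all add: prob_space.prob_space[OF prob_space_samples] of_nat_diff sq_partial_sum_0)
  also have "\<dots> = real (Suc k)^2 + 2 * real (Suc k) * (real (Suc k) - 1) / p"
    using p_pos by (cases k) (simp_all add: field_simps power2_eq_square)
  finally show ?case .
qed (simp add: sq_partial_sum_0)

lemma integral_sq_partial_sum_sq_le: "(\<integral>\<omega>. (sq_partial_sum k \<omega>)^2 \<partial>samples k) \<le> 3 * k^2"
proof -
  have "2 * real k * (real k - 1) / p \<le> 2 * real k * (real k - 1)"
    using p_pos divide_left_mono[of 1 "real p" "2 * real k * (real k - 1)"] by (cases k) auto
  then show ?thesis unfolding integral_sq_partial_sum_sq by (simp add: power2_eq_square algebra_simps)
qed

lemma integral_sq_partial_sum_mult:
  assumes "a \<le> b" "b \<le> m"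
  shows "(\<integral>\<omega>. sq_partial_sum a \<omega> * sq_partial_sum b \<omega> \<partial>samples m)
    = real a * real b + 2 * real a * (real a - 1) / p"
proof -
  have "(\<integral>\<omega>. sq_partial_sum a \<omega> * sq_partial_sum b \<omega> \<partial>samples b)
      = real a * real b + 2 * real a * (real a - 1) / p"
    using \<open>a \<le> b\<close>
  proof (induction b rule: dec_induct)
    case base
    then show ?case using integral_sq_partial_sum_sq[of a] by (simp add: power2_eq_square)
  next
    case (step b)
    have "(\<integral>\<omega>. sq_partial_sum a \<omega> * sq_partial_sum (Suc b) \<omega> \<partial>samples (Suc b))
        = (\<integral>x. sq_partial_sum a x * sq_partial_sum b x + sq_partial_sum a x \<partial>samples b)"
      using step.hyps
      by (simp add: integral_samples_Suc integrable_sq_partial_sum_mult sq_partial_sum_fun_upd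
          integral_sq_partial_sum_Suc_cond distrib_left)
    also have "\<dots> = real a * real b + 2 * real a * (real a - 1) / p + a"
      using step integrable_sq_partial_sum_mult[of a b b] integrable_sq_partial_sum[of a b]
        integral_samples_eq_if_independent[of a "sq_partial_sum a" b]
      by (simp add: integral_sq_partial_sum sq_partial_sum_fun_upd integrable_sq_partial_sum)
    finally show ?case by (simp add: algebra_simps)
  qed
  then show ?thesis
    using integral_samples_eq_if_independent[of b "\<lambda>\<omega>. sq_partial_sum a \<omega> * sq_partial_sum b \<omega>" m] assms
    by (simp add: sq_partial_sum_fun_upd integrable_sq_partial_sum_mult)
qed

lemma integral_sq_partial_sum_mult_le:
  assumes "a \<le> m" "b \<le> m"
  shows "(\<integral>\<omega>. sq_partial_sum a \<omega> * sq_partial_sum b \<omega> \<partial>samples m) \<le> real a * real b * (1 + 2 / p)"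
proof -
  have *: "(\<integral>\<omega>. sq_partial_sum a \<omega> * sq_partial_sum b \<omega> \<partial>samples m) \<le> real a * real b * (1 + 2 / p)"
    if "a \<le> b" "b \<le> m" for a b
  proof -
    have "real a - 1 \<le> real b" using that by simp
    then have "2 * real a * (real a - 1) / p \<le> 2 * a * b / p"
      using p_pos by (intro divide_right_mono) (auto intro!: mult_left_mono)
    then show ?thesis using integral_sq_partial_sum_mult[OF that] by (simp add: algebra_simps)
  qed
  show ?thesis
    using *[of a b] *[of b a] assms by (cases "a \<le> b") (simp_all add: mult.commute)
qed

end

section \<open>A bounded exponential martingale\<close>

lemma abs_exp_mult_one_minus_le:
"0 \<le> (h::real) \<Longrightarrow> \<bar>exp h * (1 - h) - 1\<bar> \<le> h^2 * exp h"
proof -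
  assume h: "0 \<le> h"
  have a: "1 - h \<le> exp (- h)" using exp_ge_add_one_self[of "-h"] by simp
  have "exp h * (1 - h) \<le> exp h * exp (-h)" using a by (intro mult_left_mono) auto
  then have up: "exp h * (1 - h) \<le> 1" by (simp add: exp_minus)
  have b: "1 + h \<le> exp h" by (rule exp_ge_add_one_self)
  have "1 \<le> (1 + h) * (1 - h + h^2)" using h by (simp add: power2_eq_square power3_eq_cube algebra_simps)
  also have "\<dots> \<le> exp h * (1 - h + h^2)"
  proof (rule mult_right_mono[OF b])
    have "0 \<le> (h - 1/2)^2 + 3/4" by (simp add: add_nonneg_nonneg)
    then show "0 \<le> 1 - h + h^2" by (simp add: power2_eq_square algebra_simps)
  qed
  finally have lo: "1 - h^2 * exp h \<le> exp h * (1 - h)" by (simp add: algebra_simps)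
  show ?thesis using up lo by (simp add: abs_le_iff algebra_simps)
qed

lemma abs_exp_minus_1_le: fixes y :: real shows "\<bar>exp y - 1\<bar> \<le> \<bar>y\<bar> * exp \<bar>y\<bar>"
proof (cases "y \<ge> 0")
  case True
  have "1 - y \<le> exp (-y)" using exp_ge_add_one_self[of "-y"] by simp
  then have "(1 - y) * exp y \<le> 1" using exp_minus_inverse[of y] by (metis exp_gt_zero mult_right_mono less_le mult.commute)
  then have "exp y - 1 \<le> y * exp y" by (simp add: algebra_simps)
  then show ?thesis using True by simp
next
  case False
  have h1: "1 - exp y \<le> - y" using exp_ge_add_one_self[of y] by linarith
  have e: "1 \<le> exp (- y)" using False by simp
  have h2: "- y \<le> - y * exp (- y)" using mult_left_mono[OF e, of "-y"] False by simp
  have "exp y \<le> 1" using False by simp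
  then have a: "\<bar>exp y - 1\<bar> = 1 - exp y" by simp
  have b: "\<bar>y\<bar> * exp \<bar>y\<bar> = - y * exp (- y)" using False by simp
  show ?thesis unfolding a b using h1 h2 by linarith
qed

lemma abs_le_add_sq_div: "0 < (d::real) \<Longrightarrow> \<bar>z\<bar> \<le> d + z^2 / d"
proof -
  assume d: "0 < d"
  show ?thesis
  proof (cases "\<bar>z\<bar> \<le> d")
    case True then show ?thesis using d by (simp add: add_increasing2)
  next
    case False
    then have "\<bar>z\<bar> * d \<le> \<bar>z\<bar> * \<bar>z\<bar>" using d by (intro mult_left_mono) auto
    then have "\<bar>z\<bar> \<le> z^2 / d" using d by (simp add: field_simps power2_eq_square)
    then show ?thesis using d by simp
  qed
qed

text \<open>\<open>increment i\<close> is the \<open>i\<close>-th martingale increment and \<open>cond_var i\<close> its conditional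
  variance given the first \<open>i - 1\<close> samples; \<open>active\<close> stops the martingale before \<open>quad_var\<close>
  exceeds 2, which keeps \<open>exp_mart\<close> bounded by \<open>exp (t\<^sup>2)\<close>.\<close>

locale sphere_clt = sphere_dim +
  fixes n :: nat and t :: real
  assumes n_pos: "0 < n"
begin

definition scale :: real where
  "scale = sqrt (2 * p) / n"

definition cond_var :: "nat \<Rightarrow> (nat \<Rightarrow> nat \<Rightarrow> real) \<Rightarrow> real" where
  "cond_var i \<omega> = 2 * sq_partial_sum (i - 1) \<omega> / (real n)^2"

definition quad_var :: "nat \<Rightarrow> (nat \<Rightarrow> nat \<Rightarrow> real) \<Rightarrow> real" where
  "quad_var j \<omega> = (\<Sum>i\<in>{1..j}. cond_var i \<omega>)"

definition active :: "nat \<Rightarrow> (nat \<Rightarrow> nat \<Rightarrow> real) \<Rightarrow> real" where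
  "active j \<omega> = (if quad_var j \<omega> \<le> 2 then 1 else 0)"

definition stopped_quad_var :: "nat \<Rightarrow> (nat \<Rightarrow> nat \<Rightarrow> real) \<Rightarrow> real" where
  "stopped_quad_var j \<omega> = (\<Sum>i\<in>{1..j}. active i \<omega> * cond_var i \<omega>)"

definition increment :: "nat \<Rightarrow> (nat \<Rightarrow> nat \<Rightarrow> real) \<Rightarrow> real" where
  "increment i \<omega> = scale * inner_p p (partial_sum (i - 1) \<omega>) (\<omega> i)"

definition stopped_sum :: "nat \<Rightarrow> (nat \<Rightarrow> nat \<Rightarrow> real) \<Rightarrow> real" where
  "stopped_sum j \<omega> = (\<Sum>i\<in>{1..j}. active i \<omega> * increment i \<omega>)"

definition exp_mart :: "nat \<Rightarrow> (nat \<Rightarrow> nat \<Rightarrow> real) \<Rightarrow> complex" where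
  "exp_mart j \<omega> = iexp (t * stopped_sum j \<omega>) * complex_of_real (exp (t^2 / 2 * stopped_quad_var j \<omega>))"

lemma cond_var_nonneg: "cond_var i \<omega> \<ge> 0" unfolding cond_var_def using sq_partial_sum_nonneg by simp

lemma active_0_or_1: "active j \<omega> = 0 \<or> active j \<omega> = 1" by (simp add: active_def)

lemma stopped_quad_var_Suc: "stopped_quad_var (Suc j) \<omega> = stopped_quad_var j \<omega> + active (Suc j) \<omega> * cond_var (Suc j) \<omega>"
  unfolding stopped_quad_var_def by simp

lemma stopped_sum_Suc: "stopped_sum (Suc j) \<omega> = stopped_sum j \<omega> + active (Suc j) \<omega> * increment (Suc j) \<omega>"
  unfolding stopped_sum_def by simp

lemma quad_var_mono: "i \<le> j \<Longrightarrow> quad_var i \<omega> \<le> quad_var j \<omega>"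
  unfolding quad_var_def by (rule sum_mono2) (auto intro: cond_var_nonneg)

lemma stopped_quad_var_le_quad_var: "stopped_quad_var j \<omega> \<le> quad_var j \<omega>"
  unfolding stopped_quad_var_def quad_var_def by (intro sum_mono) (auto simp: active_def cond_var_nonneg)

lemma stopped_quad_var_nonneg: "stopped_quad_var j \<omega> \<ge> 0"
  unfolding stopped_quad_var_def by (intro sum_nonneg) (auto simp: active_def cond_var_nonneg)

lemma stopped_quad_var_le_2: "stopped_quad_var j \<omega> \<le> 2"
proof (induction j)
  case 0 then show ?case by (simp add: stopped_quad_var_def)
next
  case (Suc j)
  show ?case
  proof (cases "quad_var (Suc j) \<omega> \<le> 2")
    case True then show ?thesis using stopped_quad_var_le_quad_var[of "Suc j" \<omega>] by simp
  next
    case False then show ?thesis using Suc by (simp add: stopped_quad_var_Suc active_def)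
  qed
qed

lemma active_cond_var_le_2: "active j \<omega> * cond_var j \<omega> \<le> 2"
proof (cases "quad_var j \<omega> \<le> 2")
  case True
  have "cond_var j \<omega> \<le> quad_var j \<omega>" if "1 \<le> j"
    unfolding quad_var_def using that by (intro member_le_sum) (auto intro: cond_var_nonneg)
  moreover have "j = 0 \<Longrightarrow> cond_var j \<omega> \<le> quad_var j \<omega>" unfolding quad_var_def cond_var_def by (simp add: sq_partial_sum_0)
  ultimately show ?thesis using True by (cases "1 \<le> j") (auto simp: active_def)
qed (simp add: active_def)

lemma stopped_eq_if_quad_var_le_2:
  "quad_var j \<omega> \<le> 2 \<Longrightarrow>
    stopped_quad_var j \<omega> = quad_var j \<omega> \<and> stopped_sum j \<omega> = (\<Sum>i\<in>{1..j}. increment i \<omega>)"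
proof -
  assume a: "quad_var j \<omega> \<le> 2"
  have g: "\<And>i. i \<in> {1..j} \<Longrightarrow> active i \<omega> = 1"
  proof -
    fix i assume "i \<in> {1..j}"
    then have "quad_var i \<omega> \<le> quad_var j \<omega>" by (intro quad_var_mono) auto
    then show "active i \<omega> = 1" using a by (simp add: active_def)
  qed
  show ?thesis unfolding stopped_quad_var_def quad_var_def stopped_sum_def using g by simp
qed

lemma abs_stopped_quad_var_minus_1_le: "\<bar>stopped_quad_var j \<omega> - 1\<bar> \<le> \<bar>quad_var j \<omega> - 1\<bar>"
proof (cases "quad_var j \<omega> \<le> 2")
  case True then show ?thesis using stopped_eq_if_quad_var_le_2 by simp
next
  case False then show ?thesis using stopped_quad_var_le_2[of j \<omega>] stopped_quad_var_nonneg[of j \<omega>] by auto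
qed

lemma cond_var_fun_upd: "1 \<le> l \<Longrightarrow> i \<le> l \<Longrightarrow> cond_var i (x(l := u)) = cond_var i x"
  unfolding cond_var_def by (simp add: sq_partial_sum_fun_upd)

lemma quad_var_fun_upd: "1 \<le> l \<Longrightarrow> j \<le> l \<Longrightarrow> quad_var j (x(l := u)) = quad_var j x"
  unfolding quad_var_def by (intro sum.cong) (auto simp: cond_var_fun_upd)

lemma active_fun_upd: "1 \<le> l \<Longrightarrow> j \<le> l \<Longrightarrow> active j (x(l := u)) = active j x"
  unfolding active_def by (simp add: quad_var_fun_upd)

lemma stopped_quad_var_fun_upd: "1 \<le> l \<Longrightarrow> j \<le> l \<Longrightarrow> stopped_quad_var j (x(l := u)) = stopped_quad_var j x"
  unfolding stopped_quad_var_def by (intro sum.cong) (auto simp: cond_var_fun_upd active_fun_upd)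

lemma increment_fun_upd: "i < l \<Longrightarrow> increment i (x(l := u)) = increment i x"
  unfolding increment_def by (simp add: partial_sum_fun_upd)

lemma stopped_sum_fun_upd: "j < l \<Longrightarrow> stopped_sum j (x(l := u)) = stopped_sum j x"
  unfolding stopped_sum_def by (intro sum.cong) (auto simp: increment_fun_upd active_fun_upd)

lemma exp_mart_fun_upd: "j < l \<Longrightarrow> exp_mart j (x(l := u)) = exp_mart j x"
  unfolding exp_mart_def by (simp add: stopped_sum_fun_upd stopped_quad_var_fun_upd)

lemma increment_Suc_upd: "increment (Suc j) (x(Suc j := u)) = scale * inner_p p (partial_sum j x) u"
  unfolding increment_def by (simp add: partial_sum_fun_upd)

lemma exp_mart_Suc_upd: "exp_mart (Suc j) (x(Suc j := u)) =
    exp_mart j x * complex_of_real (exp (t^2 / 2 * (active (Suc j) x * cond_var (Suc j) x)))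
      * iexp (t * active (Suc j) x * scale * inner_p p (partial_sum j x) u)"
proof -
  have g: "active (Suc j) (x(Suc j := u)) = active (Suc j) x" by (rule active_fun_upd) auto
  have s: "cond_var (Suc j) (x(Suc j := u)) = cond_var (Suc j) x" by (rule cond_var_fun_upd) auto
  have tu: "stopped_sum j (x(Suc j := u)) = stopped_sum j x" by (rule stopped_sum_fun_upd) simp
  have au: "stopped_quad_var j (x(Suc j := u)) = stopped_quad_var j x" by (rule stopped_quad_var_fun_upd) auto
  have "exp_mart (Suc j) (x(Suc j := u))
      = iexp (t * (stopped_sum j x + active (Suc j) x * (scale * inner_p p (partial_sum j x) u)))
        * complex_of_real (exp (t^2 / 2 * (stopped_quad_var j x + active (Suc j) x * cond_var (Suc j) x)))"
    unfolding exp_mart_def stopped_sum_Suc stopped_quad_var_Suc g s increment_Suc_upd tu au by simp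
  also have "\<dots> = exp_mart j x * complex_of_real (exp (t^2 / 2 * (active (Suc j) x * cond_var (Suc j) x)))
      * iexp (t * active (Suc j) x * scale * inner_p p (partial_sum j x) u)"
  proof -
    have e1: "iexp (t * (stopped_sum j x + active (Suc j) x * (scale * inner_p p (partial_sum j x) u))) =
        iexp (t * stopped_sum j x) * iexp (t * active (Suc j) x * scale * inner_p p (partial_sum j x) u)"
      by (simp add: distrib_left exp_add mult.assoc)
    have e2: "exp (t^2 / 2 * (stopped_quad_var j x + active (Suc j) x * cond_var (Suc j) x)) =
        exp (t^2 / 2 * stopped_quad_var j x) * exp (t^2 / 2 * (active (Suc j) x * cond_var (Suc j) x))"
      by (simp add: distrib_left exp_add)
    show ?thesis unfolding exp_mart_def e1 e2 by (simp add: mult_ac)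
  qed
  finally show ?thesis .
qed

lemma norm_exp_mart_le: "cmod (exp_mart j \<omega>) \<le> exp (t^2)"
proof -
  have "cmod (exp_mart j \<omega>) = exp (t^2 / 2 * stopped_quad_var j \<omega>)"
    unfolding exp_mart_def by (simp add: norm_mult)
  also have "\<dots> \<le> exp (t^2 / 2 * 2)"
    using stopped_quad_var_le_2[of j \<omega>] by (intro exp_le_cancel_iff[THEN iffD2] mult_left_mono) auto
  finally show ?thesis by simp
qed


lemma scale_sq: "scale^2 = 2 * p / (real n)^2"
  unfolding scale_def by (simp add: power_divide)

text \<open>By Taylor expansion the conditional characteristic function is \<open>1 - h + O(h\<^sup>2)\<close>, and
  \<open>exp h (1 - h) = 1 + O(h\<^sup>2)\<close>.\<close>

lemma norm_exp_char_increment_minus_1_le: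
  fixes s :: "nat \<Rightarrow> real"
  defines "h \<equiv> t^2 * inner_p p s s / (real n)^2"
  assumes h_le: "h \<le> t^2"
  shows "cmod (complex_of_real (exp h) * (CLINT u|\<mu>. iexp (t * scale * inner_p p s u)) - 1)
    \<le> exp (t^2) * (3/2 * t^4 * (inner_p p s s)^2 / (real n)^4)"
proof -
  let ?Q = "inner_p p s s" and ?C = "CLINT u|\<mu>. iexp (t * scale * inner_p p s u)"
  have Q: "0 \<le> ?Q" by (rule inner_p_self_nonneg)
  then have h: "0 \<le> h" unfolding h_def by simp
  have "(t * scale)^2 * ?Q / (2 * p) = h"
    unfolding h_def power_mult_distrib scale_sq using p_pos by (simp add: field_simps)
  moreover have "(t * scale)^4 * ?Q^2 / (8 * p^2) = t^4 * ?Q^2 / (2 * (real n)^4)"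
  proof -
    have "scale^4 = (scale^2)^2" by (simp flip: power_mult)
    then have "scale^4 = 4 * p^2 / (real n)^4" unfolding scale_sq by (simp add: power_divide power_mult_distrib)
    then show ?thesis unfolding power_mult_distrib using p_pos by (simp add: field_simps)
  qed
  ultimately have C: "cmod (?C - complex_of_real (1 - h)) \<le> t^4 * ?Q^2 / (2 * (real n)^4)"
    using norm_char_inner_approx[of "t * scale" s] by (simp add: mult.assoc)
  have "complex_of_real (exp h) * ?C - 1
      = complex_of_real (exp h) * (?C - complex_of_real (1 - h)) + complex_of_real (exp h * (1 - h) - 1)"
    by (simp add: algebra_simps)
  then have "cmod (complex_of_real (exp h) * ?C - 1)
      \<le> exp h * cmod (?C - complex_of_real (1 - h)) + \<bar>exp h * (1 - h) - 1\<bar>"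
    using norm_triangle_ineq[of "complex_of_real (exp h) * (?C - complex_of_real (1 - h))"
        "complex_of_real (exp h * (1 - h) - 1)"]
    by (simp only: norm_mult norm_of_real abs_exp_cancel)
  also have "\<dots> \<le> exp h * (t^4 * ?Q^2 / (2 * (real n)^4)) + h^2 * exp h"
    using C abs_exp_mult_one_minus_le[OF h] by (intro add_mono mult_left_mono) auto
  also have "\<dots> \<le> exp (t^2) * (t^4 * ?Q^2 / (2 * (real n)^4)) + h^2 * exp (t^2)"
    using h_le by (intro add_mono mult_right_mono mult_left_mono) auto
  also have "\<dots> = exp (t^2) * (3/2 * t^4 * ?Q^2 / (real n)^4)"
    unfolding h_def by (simp add: power_mult_distrib power_divide field_simps)
  finally show ?thesis .
qed

lemma norm_integral_exp_mart_step_le: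
  "cmod ((CLINT u|\<mu>. exp_mart (Suc j) (x(Suc j := u))) - exp_mart j x)
    \<le> exp (2 * t^2) * (3/2) * t^4 * (sq_partial_sum j x)^2 / (real n)^4"
proof -
  let ?a = "active (Suc j) x" and ?Q = "sq_partial_sum j x"
  define h where "h = t^2 / 2 * (?a * cond_var (Suc j) x)"
  define C where "C = (CLINT u|\<mu>. iexp (t * ?a * scale * inner_p p (partial_sum j x) u))"
  have step: "cmod (complex_of_real (exp h) * C - 1) \<le> exp (t^2) * (3/2 * t^4 * ?Q^2 / (real n)^4)"
  proof (cases "?a = 1")
    case True
    moreover have "h \<le> t^2"
      unfolding h_def using active_cond_var_le_2[of "Suc j" x] mult_left_mono[of _ 2 "t^2/2"] by simp
    ultimately show ?thesis
      using norm_exp_char_increment_minus_1_le[of "partial_sum j x"]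
      unfolding h_def C_def cond_var_def sq_partial_sum_def by simp
  next
    case False
    then have "h = 0" "C = 1" using active_0_or_1[of "Suc j" x] unfolding h_def C_def by (auto simp: P.prob_space)
    then show ?thesis by simp
  qed
  have "(CLINT u|\<mu>. exp_mart (Suc j) (x(Suc j := u))) - exp_mart j x
      = exp_mart j x * (complex_of_real (exp h) * C - 1)"
    unfolding exp_mart_Suc_upd C_def h_def by (simp add: algebra_simps)
  then have "cmod ((CLINT u|\<mu>. exp_mart (Suc j) (x(Suc j := u))) - exp_mart j x)
      \<le> exp (t^2) * (exp (t^2) * (3/2 * t^4 * ?Q^2 / (real n)^4))"
    by (simp only: norm_mult) (intro mult_mono norm_exp_mart_le step, auto)
  also have "\<dots> = exp (2 * t^2) * (3/2) * t^4 * ?Q^2 / (real n)^4"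
    by (simp add: mult_exp_exp flip: exp_add)
  finally show ?thesis .
qed

lemma measurable_cond_var: "i \<le> m \<Longrightarrow> cond_var i \<in> borel_measurable (samples m)"
  unfolding cond_var_def by (intro borel_measurable_divide borel_measurable_times borel_measurable_const
      measurable_sq_partial_sum) auto

lemma measurable_quad_var: "j \<le> m \<Longrightarrow> quad_var j \<in> borel_measurable (samples m)"
  unfolding quad_var_def by (intro borel_measurable_sum measurable_cond_var) auto

lemma measurable_active: "j \<le> m \<Longrightarrow> active j \<in> borel_measurable (samples m)"
proof -
  assume "j \<le> m"
  note measurable_quad_var[OF this, measurable]
  show ?thesis unfolding active_def by measurable
qed

lemma measurable_stopped_quad_var: "j \<le> m \<Longrightarrow> stopped_quad_var j \<in> borel_measurable (samples m)"
  unfolding stopped_quad_var_def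
  by (intro borel_measurable_sum borel_measurable_times measurable_cond_var measurable_active) auto

lemma measurable_increment: "1 \<le> i \<Longrightarrow> i \<le> m \<Longrightarrow> increment i \<in> borel_measurable (samples m)"
  unfolding increment_def inner_p_def
  by (intro borel_measurable_times borel_measurable_const borel_measurable_sum measurable_partial_sum
      measurable_sample_coordinate) auto

lemma measurable_stopped_sum: "j \<le> m \<Longrightarrow> stopped_sum j \<in> borel_measurable (samples m)"
  unfolding stopped_sum_def
  by (intro borel_measurable_sum borel_measurable_times measurable_increment measurable_active) auto

lemma measurable_exp_mart: "j \<le> m \<Longrightarrow> exp_mart j \<in> borel_measurable (samples m)"
proof -
  assume "j \<le> m"
  note measurable_stopped_sum[OF this, measurable] measurable_stopped_quad_var[OF this, measurable]
  show ?thesis unfolding exp_mart_def by measurable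
qed

lemma integrable_exp_mart: "j \<le> m \<Longrightarrow> integrable (samples m) (exp_mart j)"
proof -
  interpret Q: prob_space "samples m" by (rule prob_space_samples)
  show "j \<le> m \<Longrightarrow> ?thesis"
    by (rule Q.integrable_const_bound[where B="exp (t^2)"]) (auto intro!: AE_I2 norm_exp_mart_le measurable_exp_mart)
qed

lemma integrable_exp_mart_Suc_upd:
  assumes "x \<in> space (samples j)"
  shows "integrable \<mu> (\<lambda>u. exp_mart (Suc j) (x(Suc j := u)))"
proof -
  have "{1..Suc j} = insert (Suc j) {1..j}" by auto
  with measurable_component_update[of x "{1..j}" "\<lambda>_. \<mu>" "Suc j"] assms
  have "(\<lambda>u. x(Suc j := u)) \<in> measurable \<mu> (samples (Suc j))" by (simp add: samples_def)
  from measurable_comp[OF this measurable_exp_mart[OF order_refl]] show ?thesis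
    by (intro P.integrable_const_bound[where B="exp (t^2)"]) (auto simp: comp_def norm_exp_mart_le)
qed

lemma integral_exp_mart_Suc_diff:
  "(CLINT x|samples (Suc j). exp_mart (Suc j) x) - (CLINT x|samples j. exp_mart j x)
    = (CLINT x|samples j. (CLINT u|\<mu>. exp_mart (Suc j) (x(Suc j := u))) - exp_mart j x)"
proof -
  have int: "integrable (samples (Suc j)) (exp_mart (Suc j))" "integrable (samples (Suc j)) (exp_mart j)"
    by (simp_all add: integrable_exp_mart)
  have "(CLINT x|samples j. exp_mart j x) = (CLINT x|samples (Suc j). exp_mart j x)"
    by (simp add: integral_samples_Suc[OF int(2)] exp_mart_fun_upd P.prob_space)
  then have "(CLINT x|samples (Suc j). exp_mart (Suc j) x) - (CLINT x|samples j. exp_mart j x)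
      = (CLINT x|samples (Suc j). exp_mart (Suc j) x - exp_mart j x)"
    using int by simp
  also have "\<dots> = (CLINT x|samples j. (CLINT u|\<mu>. exp_mart (Suc j) (x(Suc j := u)) - exp_mart j (x(Suc j := u))))"
    using int by (intro integral_samples_Suc) auto
  also have "\<dots> = (CLINT x|samples j. (CLINT u|\<mu>. exp_mart (Suc j) (x(Suc j := u))) - exp_mart j x)"
    by (intro Bochner_Integration.integral_cong refl)
       (simp add: integrable_exp_mart_Suc_upd exp_mart_fun_upd P.prob_space)
  finally show ?thesis .
qed

lemma norm_integral_exp_mart_Suc_diff_le:
  "cmod ((CLINT x|samples (Suc j). exp_mart (Suc j) x) - (CLINT x|samples j. exp_mart j x))
    \<le> 9/2 * exp (2 * t^2) * t^4 * (real j)^2 / (real n)^4"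
proof -
  define K where "K = exp (2 * t^2) * (3/2) * t^4 / (real n)^4"
  have "cmod ((CLINT x|samples (Suc j). exp_mart (Suc j) x) - (CLINT x|samples j. exp_mart j x))
      \<le> (\<integral>x. K * (sq_partial_sum j x)^2 \<partial>samples j)"
    unfolding integral_exp_mart_Suc_diff
    using norm_integral_exp_mart_step_le integrable_sq_partial_sum_mult[of j j j]
    by (intro norm_integral_le_integral) (auto simp: K_def power2_eq_square)
  also have "\<dots> = K * (\<integral>x. (sq_partial_sum j x)^2 \<partial>samples j)" by simp
  also have "\<dots> \<le> K * (3 * (real j)^2)"
    using integral_sq_partial_sum_sq_le[of j] by (intro mult_left_mono) (auto simp: K_def)
  finally show ?thesis by (simp add: K_def)
qed

lemma norm_integral_exp_mart_minus_1_le: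
  "cmod ((CLINT x|samples n. exp_mart n x) - 1) \<le> 9/2 * exp (2 * t^2) * t^4 / n"
proof -
  have "cmod ((CLINT x|samples m. exp_mart m x) - 1) \<le> 9/2 * exp (2 * t^2) * t^4 * real m ^ 3 / (real n)^4"
    for m
  proof (induction m)
    case 0
    interpret Q: prob_space "samples 0" by (rule prob_space_samples)
    show ?case by (simp add: exp_mart_def stopped_sum_def stopped_quad_var_def Q.prob_space)
  next
    case (Suc m)
    have "cmod ((CLINT x|samples (Suc m). exp_mart (Suc m) x) - 1)
        \<le> cmod ((CLINT x|samples (Suc m). exp_mart (Suc m) x) - (CLINT x|samples m. exp_mart m x))
          + cmod ((CLINT x|samples m. exp_mart m x) - 1)"
      using norm_triangle_ineq by (metis diff_add_cancel add_diff_eq)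
    also have "\<dots> \<le> 9/2 * exp (2 * t^2) * t^4 * (real m)^2 / (real n)^4
        + 9/2 * exp (2 * t^2) * t^4 * real m ^ 3 / (real n)^4"
      by (intro add_mono norm_integral_exp_mart_Suc_diff_le Suc)
    also have "\<dots> = 9/2 * exp (2 * t^2) * t^4 * ((real m)^2 + real m ^ 3) / (real n)^4"
      by (simp add: add_divide_distrib distrib_left)
    also have "\<dots> \<le> 9/2 * exp (2 * t^2) * t^4 * real (Suc m) ^ 3 / (real n)^4"
      by (intro divide_right_mono mult_left_mono) (auto simp: power2_eq_square power3_eq_cube algebra_simps)
    finally show ?case .
  qed
  from this[of n] show ?thesis using n_pos by (simp add: power_eq_if field_simps)
qed

lemma quad_var_eq_sum_sq_partial_sum: "quad_var n \<omega> = 2 / (real n)^2 * (\<Sum>a<n. sq_partial_sum a \<omega>)"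
  unfolding quad_var_def cond_var_def by (simp add: sum.atLeast1_atMost_eq sum_distrib_left)

lemma quad_var_sq:
  "(quad_var n \<omega>)^2 = (2 / (real n)^2)^2 * (\<Sum>a<n. \<Sum>b<n. sq_partial_sum a \<omega> * sq_partial_sum b \<omega>)"
  unfolding quad_var_eq_sum_sq_partial_sum power_mult_distrib by (simp add: power2_eq_square sum_product)

lemma integrable_quad_var: "integrable (samples n) (quad_var n)"
  unfolding quad_var_eq_sum_sq_partial_sum
  by (intro integrable_mult_right Bochner_Integration.integrable_sum integrable_sq_partial_sum) auto

lemma integrable_quad_var_sq: "integrable (samples n) (\<lambda>\<omega>. (quad_var n \<omega>)^2)"
  unfolding quad_var_sq
  by (intro integrable_mult_right Bochner_Integration.integrable_sum integrable_sq_partial_sum_mult) auto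

lemma real_sum_lessThan_eq: "(\<Sum>a<n. real a) = real n * (real n - 1) / 2"
  by (induction n) (simp_all add: field_simps)

lemma integral_quad_var: "(\<integral>\<omega>. quad_var n \<omega> \<partial>samples n) = (real n - 1) / real n"
proof -
  have "(\<integral>\<omega>. quad_var n \<omega> \<partial>samples n) = 2 / (real n)^2 * (\<Sum>a<n. \<integral>\<omega>. sq_partial_sum a \<omega> \<partial>samples n)"
    unfolding quad_var_eq_sum_sq_partial_sum by (simp add: integrable_sq_partial_sum)
  also have "(\<Sum>a<n. \<integral>\<omega>. sq_partial_sum a \<omega> \<partial>samples n) = (\<Sum>a<n. real a)"
  proof (intro sum.cong refl)
    fix a assume "a \<in> {..<n}"
    then show "(\<integral>\<omega>. sq_partial_sum a \<omega> \<partial>samples n) = real a"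
      using integral_samples_eq_if_independent[of a "sq_partial_sum a" n]
      by (simp add: sq_partial_sum_fun_upd integrable_sq_partial_sum integral_sq_partial_sum)
  qed
  also have "2 / (real n)^2 * (\<Sum>a<n. real a) = (real n - 1) / real n"
    using n_pos by (simp add: real_sum_lessThan_eq power2_eq_square field_simps)
  finally show ?thesis .
qed

lemma integral_quad_var_sq_le:
  "(\<integral>\<omega>. (quad_var n \<omega>)^2 \<partial>samples n) \<le> (1 + 2 / p) * ((real n - 1) / real n)^2"
proof -
  have "(\<integral>\<omega>. (quad_var n \<omega>)^2 \<partial>samples n)
      = (2 / (real n)^2)^2 * (\<Sum>a<n. \<Sum>b<n. \<integral>\<omega>. sq_partial_sum a \<omega> * sq_partial_sum b \<omega> \<partial>samples n)"
  proof -
    have "(\<integral>\<omega>. (\<Sum>a<n. \<Sum>b<n. sq_partial_sum a \<omega> * sq_partial_sum b \<omega>) \<partial>samples n)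
        = (\<Sum>a<n. \<integral>\<omega>. (\<Sum>b<n. sq_partial_sum a \<omega> * sq_partial_sum b \<omega>) \<partial>samples n)"
      by (rule Bochner_Integration.integral_sum)
         (auto intro!: Bochner_Integration.integrable_sum integrable_sq_partial_sum_mult)
    also have "\<dots> = (\<Sum>a<n. \<Sum>b<n. \<integral>\<omega>. sq_partial_sum a \<omega> * sq_partial_sum b \<omega> \<partial>samples n)"
      by (intro sum.cong refl Bochner_Integration.integral_sum integrable_sq_partial_sum_mult) auto
    finally show ?thesis unfolding quad_var_sq by simp
  qed
  also have "\<dots> \<le> (2 / (real n)^2)^2 * (\<Sum>a<n. \<Sum>b<n. real a * real b * (1 + 2 / p))"
    by (intro mult_left_mono sum_mono integral_sq_partial_sum_mult_le) auto
  also have "(\<Sum>a<n. \<Sum>b<n. real a * real b * (1 + 2 / p)) = (1 + 2 / p) * (\<Sum>a<n. real a)^2"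
    by (simp add: power2_eq_square sum_product sum_distrib_left sum_distrib_right algebra_simps)
  also have "(2 / (real n)^2)^2 * ((1 + 2 / p) * (\<Sum>a<n. real a)^2) = (1 + 2 / p) * ((real n - 1) / real n)^2"
  proof -
    have "(2 / (real n)^2)^2 * (\<Sum>a<n. real a)^2 = ((real n - 1) / real n)^2"
      using n_pos by (simp add: real_sum_lessThan_eq power2_eq_square field_simps)
    then show ?thesis by (simp add: algebra_simps)
  qed
  finally show ?thesis .
qed

lemma integral_quad_var_minus_1_sq_le:
  "(\<integral>\<omega>. (quad_var n \<omega> - 1)^2 \<partial>samples n) \<le> 1 / (real n)^2 + 2 / p"
proof -
  interpret Q: prob_space "samples n" by (rule prob_space_samples)
  define x where "x = (real n - 1) / real n"
  have x: "0 \<le> x" "x \<le> 1" "(1 - x)^2 = 1 / (real n)^2"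
    unfolding x_def using n_pos by (auto simp: field_simps power2_eq_square)
  have "(\<integral>\<omega>. (quad_var n \<omega> - 1)^2 \<partial>samples n)
      = (\<integral>\<omega>. (quad_var n \<omega>)^2 \<partial>samples n) - 2 * (\<integral>\<omega>. quad_var n \<omega> \<partial>samples n) + 1"
    using integrable_quad_var integrable_quad_var_sq
    by (simp add: power2_diff Q.prob_space)
  also have "\<dots> \<le> (1 + 2 / p) * x^2 - 2 * x + 1"
    using integral_quad_var_sq_le integral_quad_var unfolding x_def by simp
  also have "\<dots> = (1 - x)^2 + 2 / p * x^2" by (simp add: power2_eq_square algebra_simps)
  also have "\<dots> \<le> 1 / (real n)^2 + 2 / p"
    using x p_pos power_le_one[of x 2] mult_right_le_one_le[of "2 / p" "x^2"] by simp
  finally show ?thesis .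
qed

lemma integral_abs_quad_var_minus_1_le:
  "(\<integral>\<omega>. \<bar>quad_var n \<omega> - 1\<bar> \<partial>samples n) \<le> 2 * sqrt (1 / (real n)^2 + 2 / p)"
proof -
  interpret Q: prob_space "samples n" by (rule prob_space_samples)
  define d where "d = sqrt (1 / (real n)^2 + 2 / p)"
  have d: "0 < d" unfolding d_def using n_pos p_pos by (simp add: add_pos_pos)
  have int: "integrable (samples n) (\<lambda>\<omega>. (quad_var n \<omega> - 1)^2)"
    using integrable_quad_var integrable_quad_var_sq by (simp add: power2_diff)
  have "(\<integral>\<omega>. \<bar>quad_var n \<omega> - 1\<bar> \<partial>samples n) \<le> (\<integral>\<omega>. d + (quad_var n \<omega> - 1)^2 / d \<partial>samples n)"
    using integrable_quad_var int by (intro integral_mono abs_le_add_sq_div d) auto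
  also have "\<dots> = d + (\<integral>\<omega>. (quad_var n \<omega> - 1)^2 \<partial>samples n) / d"
    using int by (simp add: Q.prob_space)
  also have "\<dots> \<le> d + d^2 / d"
    using integral_quad_var_minus_1_sq_le d by (intro add_left_mono divide_right_mono) (auto simp: d_def)
  also have "\<dots> = 2 * d" using d by (simp add: power2_eq_square)
  finally show ?thesis by (simp add: d_def)
qed

section \<open>The characteristic function of the statistic\<close>

definition statistic :: "(nat \<Rightarrow> nat \<Rightarrow> real) \<Rightarrow> real" where
  "statistic \<omega> = (real p / real n * (\<Sum>i\<in>{1..n}. \<Sum>j\<in>{1..n}. inner_p p (\<omega> i) (\<omega> j)) - real p)
    / sqrt (2 * real p)"

lemma measurable_statistic: "statistic \<in> borel_measurable (samples n)"
  unfolding statistic_def inner_p_def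
  by (intro borel_measurable_divide borel_measurable_diff borel_measurable_times borel_measurable_sum
      borel_measurable_const measurable_sample_coordinate) auto

lemma double_sum_inner_p_eq_sq_partial_sum:
  "(\<Sum>i\<in>{1..k}. \<Sum>j\<in>{1..k}. inner_p p (\<omega> i) (\<omega> j)) = sq_partial_sum k \<omega>"
proof -
  have "(\<Sum>i\<in>{1..k}. \<Sum>j\<in>{1..k}. \<Sum>c<p. \<omega> i c * \<omega> j c) = (\<Sum>c<p. \<Sum>i\<in>{1..k}. \<Sum>j\<in>{1..k}. \<omega> i c * \<omega> j c)"
    by (subst sum.swap[of _ "{..<p}"], subst sum.swap[of _ "{..<p}"]) (rule refl)
  then show ?thesis unfolding sq_partial_sum_def partial_sum_def inner_p_def by (simp add: sum_product)
qed

lemma sq_partial_sum_eq_sum: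
  "sq_partial_sum k \<omega>
    = (\<Sum>j\<in>{1..k}. 2 * inner_p p (partial_sum (j - 1) \<omega>) (\<omega> j) + inner_p p (\<omega> j) (\<omega> j))"
  by (induction k) (simp_all add: sq_partial_sum_0 sq_partial_sum_Suc)

text \<open>On the sphere the diagonal terms \<open>inner_p p (\<omega> i) (\<omega> i) = 1\<close> cancel the centring \<open>- p\<close>.\<close>

lemma AE_statistic_eq_sum_increment: "AE \<omega> in samples n. statistic \<omega> = (\<Sum>i\<in>{1..n}. increment i \<omega>)"
  using AE_samples_inner_p_self[of n]
proof (rule AE_mp, intro AE_I2 impI)
  fix \<omega> assume unit: "\<forall>i\<in>{1..n}. inner_p p (\<omega> i) (\<omega> i) = 1"
  have "sq_partial_sum n \<omega> = 2 * (\<Sum>j\<in>{1..n}. inner_p p (partial_sum (j - 1) \<omega>) (\<omega> j)) + n"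
    unfolding sq_partial_sum_eq_sum using unit by (simp add: sum.distrib sum_distrib_left)
  moreover have "sqrt (2 * real p) * sqrt (2 * real p) = 2 * real p" "0 < sqrt (2 * real p)"
    using p_pos by simp_all
  ultimately show "statistic \<omega> = (\<Sum>i\<in>{1..n}. increment i \<omega>)"
    unfolding statistic_def double_sum_inner_p_eq_sq_partial_sum increment_def scale_def
      sum_distrib_left[symmetric]
    using n_pos by (simp add: field_simps)
qed

lemma norm_iexp_sum_increment_minus_stopped_le:
  "cmod (iexp (t * (\<Sum>i\<in>{1..n}. increment i \<omega>)) - iexp (t * stopped_sum n \<omega>)) \<le> 2 * \<bar>quad_var n \<omega> - 1\<bar>"
proof (cases "quad_var n \<omega> \<le> 2")
  case False
  have "cmod (iexp (t * (\<Sum>i\<in>{1..n}. increment i \<omega>)) - iexp (t * stopped_sum n \<omega>)) \<le> 1 + 1"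
    using norm_triangle_ineq4 by (rule order.trans) (simp add: norm_exp_i_times)
  with False show ?thesis by simp
qed (simp add: stopped_eq_if_quad_var_le_2)

lemma norm_iexp_stopped_minus_exp_mart_le:
  "cmod (iexp (t * stopped_sum n \<omega>) - complex_of_real (exp (- (t^2 / 2))) * exp_mart n \<omega>)
    \<le> t^2 * exp (t^2) * \<bar>quad_var n \<omega> - 1\<bar>"
proof -
  define y where "y = t^2 / 2 * (stopped_quad_var n \<omega> - 1)"
  have "- (t^2 / 2) + t^2 / 2 * stopped_quad_var n \<omega> = y" unfolding y_def by (simp add: algebra_simps)
  then have e: "exp (- (t^2 / 2)) * exp (t^2 / 2 * stopped_quad_var n \<omega>) = exp y" by (simp flip: exp_add)
  have "iexp (t * stopped_sum n \<omega>) - complex_of_real (exp (- (t^2 / 2))) * exp_mart n \<omega>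
      = iexp (t * stopped_sum n \<omega>)
        * (1 - complex_of_real (exp (- (t^2 / 2)) * exp (t^2 / 2 * stopped_quad_var n \<omega>)))"
    unfolding exp_mart_def by (simp add: algebra_simps)
  moreover have "cmod (1 - complex_of_real (exp y)) = \<bar>exp y - 1\<bar>"
    by (metis norm_of_real of_real_1 of_real_diff abs_minus_commute)
  ultimately have "cmod (iexp (t * stopped_sum n \<omega>) - complex_of_real (exp (- (t^2 / 2))) * exp_mart n \<omega>)
      = \<bar>exp y - 1\<bar>"
    unfolding e by (simp add: norm_mult norm_exp_i_times)
  also have "\<dots> \<le> \<bar>y\<bar> * exp \<bar>y\<bar>" by (rule abs_exp_minus_1_le)
  also have "\<dots> \<le> (t^2 * \<bar>quad_var n \<omega> - 1\<bar>) * exp (t^2)"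
  proof (rule mult_mono)
    have "\<bar>stopped_quad_var n \<omega> - 1\<bar> \<le> 1"
      using stopped_quad_var_le_2[of n \<omega>] stopped_quad_var_nonneg[of n \<omega>] by auto
    moreover have "\<bar>y\<bar> = t^2 / 2 * \<bar>stopped_quad_var n \<omega> - 1\<bar>" unfolding y_def by (simp add: abs_mult)
    moreover have "t^2 * \<bar>stopped_quad_var n \<omega> - 1\<bar> \<le> t^2 * \<bar>quad_var n \<omega> - 1\<bar>"
      using abs_stopped_quad_var_minus_1_le[of n \<omega>] by (intro mult_left_mono) auto
    moreover have "0 \<le> t^2 * \<bar>stopped_quad_var n \<omega> - 1\<bar>" by simp
    ultimately show "\<bar>y\<bar> \<le> t^2 * \<bar>quad_var n \<omega> - 1\<bar>" "exp \<bar>y\<bar> \<le> exp (t^2)"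
      using mult_left_mono[of "\<bar>stopped_quad_var n \<omega> - 1\<bar>" 1 "t^2"] by auto
  qed auto
  finally show ?thesis by (simp add: algebra_simps)
qed

lemma norm_iexp_sum_increment_minus_exp_mart_le:
  "cmod (iexp (t * (\<Sum>i\<in>{1..n}. increment i \<omega>)) - complex_of_real (exp (- (t^2 / 2))) * exp_mart n \<omega>)
    \<le> (2 + t^2 * exp (t^2)) * \<bar>quad_var n \<omega> - 1\<bar>"
  using norm_triangle_ineq[of "iexp (t * (\<Sum>i\<in>{1..n}. increment i \<omega>)) - iexp (t * stopped_sum n \<omega>)"
      "iexp (t * stopped_sum n \<omega>) - complex_of_real (exp (- (t^2 / 2))) * exp_mart n \<omega>"]
    norm_iexp_sum_increment_minus_stopped_le[of \<omega>] norm_iexp_stopped_minus_exp_mart_le[of \<omega>]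
  by (simp add: algebra_simps)

lemma norm_char_statistic_le:
  "cmod ((CLINT \<omega>|samples n. iexp (t * statistic \<omega>)) - complex_of_real (exp (- (t^2 / 2))))
     \<le> (2 + t^2 * exp (t^2)) * (2 * sqrt (1 / (real n)^2 + 2 / p)) + 9/2 * exp (2 * t^2) * t^4 / n"
proof -
  interpret Q: prob_space "samples n" by (rule prob_space_samples)
  define M where "M \<omega> = (\<Sum>i\<in>{1..n}. increment i \<omega>)" for \<omega>
  define e where "e = complex_of_real (exp (- (t^2 / 2)))"
  define W where "W = (CLINT \<omega>|samples n. exp_mart n \<omega>)"
  have [measurable]: "M \<in> borel_measurable (samples n)"
    unfolding M_def by (intro borel_measurable_sum measurable_increment) auto
  note [measurable] = measurable_exp_mart[OF order_refl] measurable_statistic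
  have int_M: "integrable (samples n) (\<lambda>\<omega>. iexp (t * M \<omega>))"
    by (rule Q.integrable_const_bound[where B=1]) (auto simp: norm_exp_i_times)
  have "(CLINT \<omega>|samples n. iexp (t * statistic \<omega>)) = (CLINT \<omega>|samples n. iexp (t * M \<omega>))"
    by (rule integral_cong_AE, simp_all, rule AE_mp[OF AE_statistic_eq_sum_increment])
       (auto intro!: AE_I2 simp: M_def)
  then have "(CLINT \<omega>|samples n. iexp (t * statistic \<omega>)) - e
      = (CLINT \<omega>|samples n. iexp (t * M \<omega>) - e * exp_mart n \<omega>) + e * (W - 1)"
    using int_M integrable_exp_mart[of n n] by (simp add: W_def algebra_simps)
  then have "cmod ((CLINT \<omega>|samples n. iexp (t * statistic \<omega>)) - e)
      \<le> cmod (CLINT \<omega>|samples n. iexp (t * M \<omega>) - e * exp_mart n \<omega>) + cmod e * cmod (W - 1)"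
    using norm_triangle_ineq[of "CLINT \<omega>|samples n. iexp (t * M \<omega>) - e * exp_mart n \<omega>" "e * (W - 1)"]
    by (simp add: norm_mult)
  also have "\<dots> \<le> (\<integral>\<omega>. (2 + t^2 * exp (t^2)) * \<bar>quad_var n \<omega> - 1\<bar> \<partial>samples n)
      + 1 * (9/2 * exp (2 * t^2) * t^4 / n)"
    using integrable_quad_var norm_iexp_sum_increment_minus_exp_mart_le norm_integral_exp_mart_minus_1_le
    by (intro add_mono mult_mono norm_integral_le_integral) (auto simp: M_def e_def W_def)
  also have "\<dots> \<le> (2 + t^2 * exp (t^2)) * (2 * sqrt (1 / (real n)^2 + 2 / p)) + 9/2 * exp (2 * t^2) * t^4 / n"
    by (simp, intro mult_left_mono integral_abs_quad_var_minus_1_le) auto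
  finally show ?thesis unfolding e_def .
qed

end

section \<open>Convergence to the normal distribution\<close>

lemma measurable_sphere_statistic:
  assumes "\<And>i. i \<in> {1..n} \<Longrightarrow> U i \<in> measurable M (euclid_space p)"
  shows "(\<lambda>\<omega>. (real p / real n * (\<Sum>i\<in>{1..n}. \<Sum>j\<in>{1..n}. inner_p p (U i \<omega>) (U j \<omega>)) - real p)
      / sqrt (2 * real p)) \<in> borel_measurable M"
proof -
  have "(\<lambda>\<omega>. U i \<omega> c) \<in> borel_measurable M" if "i \<in> {1..n}" "c < p" for i c
    using measurable_comp[OF assms[OF that(1)] measurable_coordinate_euclid_space[OF that(2)]]
    by (simp add: comp_def)
  then show ?thesis
    unfolding inner_p_def
    by (intro borel_measurable_divide borel_measurable_diff borel_measurable_times borel_measurable_sum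
        borel_measurable_const) auto
qed

lemma real_distribution_sphere_statistic:
  assumes M: "prob_space M" and indep: "prob_space.indep_vars M (\<lambda>_. euclid_space p) U {1..n}"
  shows "real_distribution (distr M borel (\<lambda>\<omega>. (real p / real n
    * (\<Sum>i\<in>{1..n}. \<Sum>j\<in>{1..n}. inner_p p (U i \<omega>) (U j \<omega>)) - real p) / sqrt (2 * real p)))"
proof -
  have "\<And>i. i \<in> {1..n} \<Longrightarrow> U i \<in> measurable M (euclid_space p)"
    using indep unfolding prob_space.indep_vars_def[OF M] by blast
  from measurable_sphere_statistic[of n U M p, OF this] show ?thesis
    using prob_space.prob_space_distr[OF M] by (simp add: real_distribution_def real_distribution_axioms_def)
qed

text \<open>Independence turns the joint law of \<open>U 1, \<dots>, U n\<close> into the product measure \<open>samples n\<close>.\<close>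

lemma norm_char_sphere_statistic_le:
  fixes U :: "nat \<Rightarrow> 'a \<Rightarrow> (nat \<Rightarrow> real)"
  assumes p: "0 < p" and n: "0 < n" and M: "prob_space M"
    and indep: "prob_space.indep_vars M (\<lambda>_. euclid_space p) U {1..n}"
    and unif: "\<And>i. i \<in> {1..n} \<Longrightarrow> distr M (euclid_space p) (U i) = unif_sphere p"
  defines "f \<equiv> \<lambda>\<omega>. (real p / real n * (\<Sum>i\<in>{1..n}. \<Sum>j\<in>{1..n}. inner_p p (U i \<omega>) (U j \<omega>)) - real p)
      / sqrt (2 * real p)"
  shows "cmod (char (distr M borel f) t - complex_of_real (exp (- (t^2 / 2))))
    \<le> (2 + t^2 * exp (t^2)) * (2 * sqrt (1 / (real n)^2 + 2 / p)) + 9/2 * exp (2 * t^2) * t^4 / n"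
proof -
  interpret C: sphere_clt p n t by unfold_locales (use p n in auto)
  interpret prob_space M by (rule M)
  let ?E = "euclid_space p" and ?X = "\<lambda>\<omega>. \<lambda>i\<in>{1..n}. U i \<omega>"
  have rv: "\<And>i. i \<in> {1..n} \<Longrightarrow> U i \<in> measurable M ?E"
    using indep unfolding indep_vars_def by blast
  have "distr M (PiM {1..n} (\<lambda>_. ?E)) ?X = PiM {1..n} (\<lambda>i. distr M ?E (U i))"
    using indep_vars_iff_distr_eq_PiM'[of "{1..n}" U "\<lambda>_. ?E"] indep rv n by auto
  also have "\<dots> = C.samples n" unfolding C.samples_def by (intro PiM_cong refl) (simp add: unif)
  finally have D: "distr M (PiM {1..n} (\<lambda>_. ?E)) ?X = C.samples n" .
  have "sets (C.samples n) = sets (PiM {1..n} (\<lambda>_. ?E))"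
    unfolding C.samples_def by (intro sets_PiM_cong) (auto simp: sets_unif_sphere)
  then have [measurable]: "C.statistic \<in> borel_measurable (PiM {1..n} (\<lambda>_. ?E))"
    using C.measurable_statistic measurable_cong_sets by blast
  have X: "?X \<in> measurable M (PiM {1..n} (\<lambda>_. ?E))" by (intro measurable_restrict rv)
  have iexp_statistic: "(\<lambda>\<omega>. iexp (t * C.statistic \<omega>)) \<in> borel_measurable (PiM {1..n} (\<lambda>_. ?E))"
    by measurable
  have f: "f \<omega> = C.statistic (?X \<omega>)" for \<omega>
    unfolding f_def C.statistic_def by (intro arg_cong2[where f="(/)"] arg_cong2[where f="(-)"]
        arg_cong2[where f="(*)"] sum.cong refl) auto
  have "f \<in> borel_measurable M" unfolding f_def by (rule measurable_sphere_statistic[OF rv])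
  then have "char (distr M borel f) t = (CLINT \<omega>|M. iexp (t * f \<omega>))"
    unfolding char_def by (subst integral_distr) auto
  also have "\<dots> = (CLINT \<omega>|distr M (PiM {1..n} (\<lambda>_. ?E)) ?X. iexp (t * C.statistic \<omega>))"
    unfolding f by (rule integral_distr[OF X iexp_statistic, symmetric])
  also have "\<dots> = (CLINT \<omega>|C.samples n. iexp (t * C.statistic \<omega>))" unfolding D ..
  finally show ?thesis using C.norm_char_statistic_le by simp
qed

lemma tendsto_char_error_bound:
  fixes p :: "nat \<Rightarrow> nat"
  assumes "filterlim p at_top sequentially"
  shows "(\<lambda>n. (2 + t^2 * exp (t^2)) * (2 * sqrt (1 / (real n)^2 + 2 / real (p n)))
      + 9/2 * exp (2 * t^2) * t^4 / real n) \<longlonglongrightarrow> 0"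
proof -
  have "(\<lambda>n. 2 / real (p n)) \<longlonglongrightarrow> 0"
    using tendsto_mult[OF tendsto_const[of 2] tendsto_inverse_0_at_top[OF filterlim_compose[OF
          filterlim_real_sequentially assms]]]
    by (simp add: divide_inverse)
  moreover have "(\<lambda>n. 1 / (real n)^2) \<longlonglongrightarrow> 0"
    using tendsto_mult[OF lim_1_over_n lim_1_over_n] by (simp add: power2_eq_square)
  ultimately have "(\<lambda>n. sqrt (1 / (real n)^2 + 2 / real (p n))) \<longlonglongrightarrow> 0"
    using tendsto_real_sqrt[OF tendsto_add] by force
  from tendsto_add[OF tendsto_mult[OF tendsto_const tendsto_mult[OF tendsto_const this]]
      tendsto_mult[OF tendsto_const[of "9 / 2 * exp (2 * t^2) * t^4"] lim_1_over_n]]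
  show ?thesis by simp
qed

theorem theorem1:
  fixes p :: "nat \<Rightarrow> nat"
    and M :: "nat \<Rightarrow> 'a measure"
    and U :: "nat \<Rightarrow> nat \<Rightarrow> 'a \<Rightarrow> (nat \<Rightarrow> real)"
  assumes p_pos: "\<And>n. p n > 0"
    and p_lim: "filterlim p at_top sequentially"
    and prob: "\<And>n. prob_space (M n)"
    and indep: "\<And>n. prob_space.indep_vars (M n) (\<lambda>_. euclid_space (p n)) (U n) {1..n}"
    and unif: "\<And>n i. i \<in> {1..n} \<Longrightarrow> distr (M n) (euclid_space (p n)) (U n i) = unif_sphere (p n)"
  shows "weak_conv_m
           (\<lambda>n. distr (M n) borel
              (\<lambda>\<omega>. (real (p n) / real n * (\<Sum>i\<in>{1..n}. \<Sum>j\<in>{1..n}. inner_p (p n) (U n i \<omega>) (U n j \<omega>))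
                     - real (p n)) / sqrt (2 * real (p n))))
           std_normal_distribution"
proof -
  define f where "f = (\<lambda>n \<omega>. (real (p n) / real n
    * (\<Sum>i\<in>{1..n}. \<Sum>j\<in>{1..n}. inner_p (p n) (U n i \<omega>) (U n j \<omega>)) - real (p n)) / sqrt (2 * real (p n)))"
  have "real_distribution (distr (M n) borel (f n))" for n
    unfolding f_def by (rule real_distribution_sphere_statistic[OF prob indep])
  moreover have "(\<lambda>n. char (distr (M n) borel (f n)) t) \<longlonglongrightarrow> char std_normal_distribution t" for t
  proof -
    have "\<forall>\<^sub>F n in sequentially. cmod (char (distr (M n) borel (f n)) t - complex_of_real (exp (- (t^2 / 2))))
        \<le> (2 + t^2 * exp (t^2)) * (2 * sqrt (1 / (real n)^2 + 2 / real (p n))) + 9/2 * exp (2 * t^2) * t^4 / real n"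
      using eventually_gt_at_top[of "0::nat"]
      unfolding f_def by eventually_elim (rule norm_char_sphere_statistic_le[OF p_pos _ prob indep unif])
    from Lim_null_comparison[OF this tendsto_char_error_bound[OF p_lim]] show ?thesis
      by (simp add: char_std_normal_distribution LIM_zero_cancel)
  qed
  ultimately have "weak_conv_m (\<lambda>n. distr (M n) borel (f n)) std_normal_distribution"
    by (rule levy_continuity[OF _ real_dist_normal_dist])
  then show ?thesis unfolding f_def .
qed

end
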